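(* Let $\{(\mathbf{z}_{ni},v_{ni},\epsilon_{ni})\}$ be a triangular array satisfying: (a) within rows iid and mean zero; (b) $E[\mathbf{z}_{ni}\epsilon_{ni}]=\mathbf{0}$, $E[\mathbf{z}_{ni}v_{ni}]=\mathbf{0}$, $E[\epsilon_{ni}v_{ni}]=\tau/\sqrt{n}$; (c) uniformly bounded $(4+\eta)$-th moments of $\mathbf{z}_{ni},\epsilon_{ni},v_{ni}$ for some $\eta>0$; (d) $E[\mathbf{z}_{ni}\mathbf{z}_{ni}']\to Q>0$, $E[v_{ni}^2]\to\sigma_v^2>0$, $E[\epsilon_{ni}^2]\to\sigma_\epsilon^2>0$; (e) $E[\epsilon_{ni}^2\mathbf{z}_{ni}\mathbf{z}_{ni}']-E[\epsilon_{ni}^2]E[\mathbf{z}_{ni}\mathbf{z}_{ni}']\to0$, $E[\epsilon_{ni}^2v_{ni}\mathbf{z}_{ni}']-E[\epsilon_{ni}^2]E[v_{ni}\mathbf{z}_{ni}']\to0$, $E[\epsilon_{ni}^2v_{ni}^2]-E[\epsilon_{ni}^2]E[v_{ni}^2]\to0$; (f) $x_{ni}=\mathbf{z}_{ni}'\boldsymbol{\pi}+v_{ni}$, $\boldsymbol{\pi}\ne\mathbf{0}$, $y_{ni}=\beta x_{ni}+\epsilon_{ni}$. Let $\widetilde{\beta}_{TSLS}=(\mathbf{x}'P_Z\mathbf{x})^{-1}\mathbf{x}'P_Z\mathbf{y}$ with $P_Z=Z(Z'Z)^{-1}Z'$, and $\widehat{\tau}=n^{-1/2}\mathbf{x}'(\mathbf{y}-\mathbf{x}\widetilde{\beta}_{TSLS})$.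 Then $\widehat{\tau}\to_dN(\tau,V)$ with $V=\sigma_\epsilon^2\sigma_x^2(\sigma_v^2/\gamma^2)$, where $\gamma^2=\boldsymbol{\pi}'Q\boldsymbol{\pi}$ and $\sigma_x^2=\gamma^2+\sigma_v^2$.
   Context: $\mathbf{x},\mathbf{y}$ stack $x_{ni},y_{ni}$; $Z$ has rows $\mathbf{z}_{ni}'$. *)

theory Defs
  imports "HOL-Probability.Probability"
begin

definition outer :: "real^'k \<Rightarrow> real^'k \<Rightarrow> real^'k^'k" where
  "outer a b = (\<chi> i j. a $ i * b $ j)"

definition pos_def_mat :: "real^'k^'k \<Rightarrow> bool" where
  "pos_def_mat Q \<longleftrightarrow> (\<forall>x. x \<noteq> 0 \<longrightarrow> x \<bullet> (Q *v x) > 0)"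

text \<open>Sample of size n with instrument rows z i (i < n): Z'Z and Z'a.\<close>
definition ZtZ :: "nat \<Rightarrow> (nat \<Rightarrow> real^'k) \<Rightarrow> real^'k^'k" where
  "ZtZ n z = (\<Sum>i<n. outer (z i) (z i))"

definition Zt :: "nat \<Rightarrow> (nat \<Rightarrow> real^'k) \<Rightarrow> (nat \<Rightarrow> real) \<Rightarrow> real^'k" where
  "Zt n z a = (\<Sum>i<n. a i *\<^sub>R z i)"

text \<open>Bilinear form a' P_Z b = (Z'a)' (Z'Z)^{-1} (Z'b); set to 0 if Z'Z is singular.\<close>
definition projform :: "nat \<Rightarrow> (nat \<Rightarrow> real^'k) \<Rightarrow> (nat \<Rightarrow> real) \<Rightarrow> (nat \<Rightarrow> real) \<Rightarrow> real" where
  "projform n z a b =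
     (if invertible (ZtZ n z) then Zt n z a \<bullet> (matrix_inv (ZtZ n z) *v Zt n z b) else 0)"

text \<open>TSLS estimator (x'P_Z x)^{-1} x'P_Z y (division by 0 gives 0).\<close>
definition beta_tsls :: "nat \<Rightarrow> (nat \<Rightarrow> real^'k) \<Rightarrow> (nat \<Rightarrow> real) \<Rightarrow> (nat \<Rightarrow> real) \<Rightarrow> real" where
  "beta_tsls n z x y = projform n z x y / projform n z x x"

definition tau_hat :: "nat \<Rightarrow> (nat \<Rightarrow> real^'k) \<Rightarrow> (nat \<Rightarrow> real) \<Rightarrow> (nat \<Rightarrow> real) \<Rightarrow> real" where
  "tau_hat n z x y = (\<Sum>i<n. x i * (y i - x i * beta_tsls n z x y)) / sqrt (real n)"

end

theory Submission
  imports Defs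
begin

text \<open>With A = Z'Z, w = Z'v and b = Z'\<epsilon>, the relation x = Z\<pi> + v gives the closed form
  tau_hat = n^(-1/2) (x'\<epsilon> - x'x (x'P_Z \<epsilon>) / (x'P_Z x)), where x'P_Z x = \<pi>'A\<pi> + 2\<pi>'w + w'A^(-1)w
  and x'P_Z \<epsilon> = \<pi>'b + w'A^(-1)b. By the law of large numbers A/n \<rightarrow> Q, w/n \<rightarrow> 0 and
  v'v/n \<rightarrow> \<sigma>_v^2, while b/\<surd>n is tight; on the event where these sample moments are within a
  fixed tolerance of their limits, tau_hat is uniformly close to n^(-1/2) \<Sum>_i Y_i with
  Y_i = (1 - \<sigma>_x^2/\<gamma>^2)(z_i'\<pi>)\<epsilon>_i + v_i\<epsilon>_i.
  Within a row the Y_i are i.i.d. with mean \<tau>/\<surd>n, and condition (e) makes their variance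
  converge to \<sigma>_\<epsilon>^2 (\<sigma>_v^4/\<gamma>^2 + \<sigma>_v^2) = V. The moments of order 4 + \<eta> give Lyapunov's
  condition, so a central limit theorem for triangular arrays, proved with characteristic
  functions, and Slutsky's lemma finish the proof.\<close>

section \<open>Row sums of independent identically distributed arrays\<close>

lemma (in prob_space) indep_sum_square:
  fixes Y :: "'i \<Rightarrow> 'a \<Rightarrow> real"
  assumes ind: "indep_vars (\<lambda>_. borel) Y I" and fin: "finite I"
    and sq: "\<And>i. i \<in> I \<Longrightarrow> integrable M (\<lambda>\<omega>. (Y i \<omega>)\<^sup>2)"
    and mean: "\<And>i. i \<in> I \<Longrightarrow> expectation (Y i) = 0"
  shows "integrable M (\<lambda>\<omega>. (\<Sum>i\<in>I. Y i \<omega>)\<^sup>2)"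
    and "expectation (\<lambda>\<omega>. (\<Sum>i\<in>I. Y i \<omega>)\<^sup>2) = (\<Sum>i\<in>I. expectation (\<lambda>\<omega>. (Y i \<omega>)\<^sup>2))"
proof -
  have int1: "integrable M (Y i)" if "i \<in> I" for i
    using ind sq[OF that] that square_integrable_imp_integrable unfolding indep_vars_def2 by blast
  have cross: "integrable M (\<lambda>\<omega>. Y i \<omega> * Y j \<omega>) \<and>
      expectation (\<lambda>\<omega>. Y i \<omega> * Y j \<omega>) = (if i = j then expectation (\<lambda>\<omega>. (Y i \<omega>)\<^sup>2) else 0)"
    if ij: "i \<in> I" "j \<in> I" for i j
  proof (cases "i = j")
    case True
    then show ?thesis using sq[OF ij(1)] by (simp add: power2_eq_square)
  next
    case False
    have ind2: "indep_vars (\<lambda>_. borel) Y {i, j}"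
      using indep_vars_subset[OF ind] ij by auto
    have "\<And>l. l \<in> {i, j} \<Longrightarrow> integrable M (Y l)" using int1 ij by auto
    note prod = indep_vars_integrable[OF _ ind2 this] indep_vars_lebesgue_integral[OF _ ind2 this]
    have "(\<lambda>\<omega>. \<Prod>l\<in>{i, j}. Y l \<omega>) = (\<lambda>\<omega>. Y i \<omega> * Y j \<omega>)" using False by auto
    then show ?thesis using prod False mean ij by auto
  qed
  have square: "(\<lambda>\<omega>. (\<Sum>i\<in>I. Y i \<omega>)\<^sup>2) = (\<lambda>\<omega>. \<Sum>i\<in>I. \<Sum>j\<in>I. Y i \<omega> * Y j \<omega>)"
    by (simp add: power2_eq_square sum_product)
  show "integrable M (\<lambda>\<omega>. (\<Sum>i\<in>I. Y i \<omega>)\<^sup>2)"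
    unfolding square using cross by auto
  have "expectation (\<lambda>\<omega>. (\<Sum>i\<in>I. Y i \<omega>)\<^sup>2) = (\<Sum>i\<in>I. \<Sum>j\<in>I. expectation (\<lambda>\<omega>. Y i \<omega> * Y j \<omega>))"
    unfolding square using cross by (simp add: Bochner_Integration.integral_sum)
  also have "\<dots> = (\<Sum>i\<in>I. \<Sum>j\<in>I. if i = j then expectation (\<lambda>\<omega>. (Y i \<omega>)\<^sup>2) else 0)"
    using cross by (intro sum.cong) auto
  finally show "expectation (\<lambda>\<omega>. (\<Sum>i\<in>I. Y i \<omega>)\<^sup>2) = (\<Sum>i\<in>I. expectation (\<lambda>\<omega>. (Y i \<omega>)\<^sup>2))"
    using fin by (simp add: sum.delta)
qed

lemma (in prob_space)
  fixes T :: "'i \<Rightarrow> 'a \<Rightarrow> 'b::topological_space" and h :: "'b \<Rightarrow> real"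
  assumes "distr M borel (T i) = distr M borel (T j)"
    and "T i \<in> borel_measurable M" "T j \<in> borel_measurable M"
    and "h \<in> borel_measurable borel"
  shows integral_eq_if_distr_eq: "(\<integral>\<omega>. h (T i \<omega>) \<partial>M) = (\<integral>\<omega>. h (T j \<omega>) \<partial>M)"
    and integrable_iff_if_distr_eq: "integrable M (\<lambda>\<omega>. h (T i \<omega>)) \<longleftrightarrow> integrable M (\<lambda>\<omega>. h (T j \<omega>))"
proof -
  have "(\<integral>\<omega>. h (T i \<omega>) \<partial>M) = (\<integral>x. h x \<partial>distr M borel (T i))"
    by (subst integral_distr) (use assms in auto)
  also have "\<dots> = (\<integral>x. h x \<partial>distr M borel (T j))" using assms(1) by simp
  also have "\<dots> = (\<integral>\<omega>. h (T j \<omega>) \<partial>M)" using assms by (simp add: integral_distr)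
  finally show "(\<integral>\<omega>. h (T i \<omega>) \<partial>M) = (\<integral>\<omega>. h (T j \<omega>) \<partial>M)" .
  have "integrable (distr M borel (T l)) h \<longleftrightarrow> integrable M (\<lambda>\<omega>. h (T l \<omega>))" if "l \<in> {i, j}" for l
    by (rule integrable_distr_eq) (use assms that in auto)
  then show "integrable M (\<lambda>\<omega>. h (T i \<omega>)) \<longleftrightarrow> integrable M (\<lambda>\<omega>. h (T j \<omega>))"
    using assms(1) by (metis insertI1 insert_subset subset_insertI)
qed

lemma (in prob_space) chebyshev_iid_sum:
  fixes T :: "nat \<Rightarrow> 'a \<Rightarrow> 'b::topological_space" and g :: "'b \<Rightarrow> real"
  assumes ind: "indep_vars (\<lambda>_. borel) T {..<n}"
    and ident: "\<And>i. i < n \<Longrightarrow> distr M borel (T i) = distr M borel (T 0)"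
    and g[measurable]: "g \<in> borel_measurable borel"
    and sq: "integrable M (\<lambda>\<omega>. (g (T 0 \<omega>))\<^sup>2)"
    and n: "0 < n" and a: "0 < a"
  shows "prob {\<omega> \<in> space M. a \<le> \<bar>(\<Sum>i<n. g (T i \<omega>)) - real n * expectation (\<lambda>\<omega>. g (T 0 \<omega>))\<bar>}
           \<le> real n * expectation (\<lambda>\<omega>. (g (T 0 \<omega>))\<^sup>2) / a\<^sup>2"
proof -
  define m where "m = expectation (\<lambda>\<omega>. g (T 0 \<omega>))"
  define Y where "Y i \<omega> = g (T i \<omega>) - m" for i \<omega>
  have rv[measurable]: "\<And>i. i < n \<Longrightarrow> T i \<in> borel_measurable M"
    using ind unfolding indep_vars_def2 by auto
  have rv0[measurable]: "T 0 \<in> borel_measurable M" using rv n by auto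
  have int0: "integrable M (\<lambda>\<omega>. g (T 0 \<omega>))"
    using sq square_integrable_imp_integrable[of "\<lambda>\<omega>. g (T 0 \<omega>)"] by auto
  have sq0: "integrable M (\<lambda>\<omega>. (g (T 0 \<omega>) - m)\<^sup>2)"
    using sq int0 unfolding power2_diff by auto
  have var_le: "expectation (\<lambda>\<omega>. (g (T 0 \<omega>) - m)\<^sup>2) \<le> expectation (\<lambda>\<omega>. (g (T 0 \<omega>))\<^sup>2)"
  proof -
    have "expectation (\<lambda>\<omega>. (g (T 0 \<omega>) - m)\<^sup>2) = expectation (\<lambda>\<omega>. (g (T 0 \<omega>))\<^sup>2) - m\<^sup>2"
      using sq int0 unfolding power2_diff
      by (simp add: prob_space m_def mult.assoc power2_eq_square)
    then show ?thesis by simp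
  qed
  have "(\<lambda>t. (g t - m)\<^sup>2) \<in> borel_measurable borel" "(\<lambda>t. g t - m) \<in> borel_measurable borel"
    by measurable
  have same_distr: "expectation (\<lambda>\<omega>. h (T i \<omega>)) = expectation (\<lambda>\<omega>. h (T 0 \<omega>))"
      "integrable M (\<lambda>\<omega>. h (T i \<omega>)) \<longleftrightarrow> integrable M (\<lambda>\<omega>. h (T 0 \<omega>))"
    if "i < n" "h \<in> borel_measurable borel" for i and h :: "'b \<Rightarrow> real"
    using integral_eq_if_distr_eq[OF ident[OF that(1)] rv[OF that(1)] rv0 that(2)]
      integrable_iff_if_distr_eq[OF ident[OF that(1)] rv[OF that(1)] rv0 that(2)] by auto
  have sqY: "integrable M (\<lambda>\<omega>. (Y i \<omega>)\<^sup>2)"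
    and varY: "expectation (\<lambda>\<omega>. (Y i \<omega>)\<^sup>2) = expectation (\<lambda>\<omega>. (g (T 0 \<omega>) - m)\<^sup>2)"
    and meanY: "expectation (Y i) = 0" if i: "i < n" for i
  proof -
    show "integrable M (\<lambda>\<omega>. (Y i \<omega>)\<^sup>2)"
      "expectation (\<lambda>\<omega>. (Y i \<omega>)\<^sup>2) = expectation (\<lambda>\<omega>. (g (T 0 \<omega>) - m)\<^sup>2)"
      unfolding Y_def using same_distr[of i "\<lambda>t. (g t - m)\<^sup>2"] i sq0 by auto
    have "integrable M (\<lambda>\<omega>. g (T i \<omega>))" using same_distr[of i g] i int0 by simp
    then have "expectation (Y i) = expectation (\<lambda>\<omega>. g (T i \<omega>)) - m"
      unfolding Y_def by (simp add: prob_space)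
    then show "expectation (Y i) = 0" using same_distr[of i g] i m_def by simp
  qed
  have indY: "indep_vars (\<lambda>_. borel) Y {..<n}"
    unfolding Y_def by (rule indep_vars_compose2[OF ind]) auto
  note sum_sq = indep_sum_square[OF indY _ sqY meanY]
  have centered: "(\<Sum>i<n. g (T i \<omega>)) - real n * m = (\<Sum>i<n. Y i \<omega>)" for \<omega>
    unfolding Y_def by (simp add: sum_subtractf)
  have "prob {\<omega> \<in> space M. a \<le> \<bar>\<Sum>i<n. Y i \<omega>\<bar>} \<le> expectation (\<lambda>\<omega>. (\<Sum>i<n. Y i \<omega>)\<^sup>2) / a\<^sup>2"
    by (rule second_moment_method) (use sum_sq a in \<open>auto simp: Y_def\<close>)
  also have "\<dots> = real n * expectation (\<lambda>\<omega>. (g (T 0 \<omega>) - m)\<^sup>2) / a\<^sup>2"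
    using sum_sq varY by simp
  also have "\<dots> \<le> real n * expectation (\<lambda>\<omega>. (g (T 0 \<omega>))\<^sup>2) / a\<^sup>2"
    using var_le by (intro divide_right_mono mult_left_mono) auto
  finally show ?thesis unfolding centered[symmetric] m_def .
qed

lemma char_distr_divide:
  assumes "f \<in> borel_measurable M"
  shows "char (distr M borel (\<lambda>\<omega>. f \<omega> / c)) t = char (distr M borel f) (t / c)"
  using assms unfolding char_def by (simp add: integral_distr field_simps)

lemma char_iid_sum_divide:
  fixes X :: "nat \<Rightarrow> 'a \<Rightarrow> real"
  assumes "prob_space M"
    and ind: "prob_space.indep_vars M (\<lambda>_. borel) X {..<n}"
    and ident: "\<And>i. i < n \<Longrightarrow> distr M borel (X i) = distr M borel (X 0)"
  shows "char (distr M borel (\<lambda>\<omega>. (\<Sum>i<n. X i \<omega>) / c)) t = (char (distr M borel (X 0)) (t / c)) ^ n"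
proof -
  interpret prob_space M by fact
  have rv: "\<And>i. i < n \<Longrightarrow> X i \<in> borel_measurable M"
    using ind unfolding indep_vars_def2 by auto
  have "indep_vars (\<lambda>_. borel) (\<lambda>i \<omega>. X i \<omega> / c) {..<n}"
    by (rule indep_vars_compose2[OF ind]) auto
  then have "char (distr M borel (\<lambda>\<omega>. \<Sum>i<n. X i \<omega> / c)) t
      = (\<Prod>i<n. char (distr M borel (\<lambda>\<omega>. X i \<omega> / c)) t)"
    by (rule char_distr_sum)
  also have "\<dots> = (\<Prod>i<n. char (distr M borel (X 0)) (t / c))"
  proof (rule prod.cong)
    fix i assume "i \<in> {..<n}"
    then have i: "i < n" by simp
    show "char (distr M borel (\<lambda>\<omega>. X i \<omega> / c)) t = char (distr M borel (X 0)) (t / c)"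
      using char_distr_divide[OF rv[OF i]] ident[OF i] by simp
  qed simp
  finally show ?thesis by (simp add: sum_divide_distrib)
qed

section \<open>A central limit theorem for triangular arrays\<close>

lemma min_square_cube_le_powr:
  fixes x u \<delta> :: real
  assumes "0 \<le> u" "0 < \<delta>" "\<delta> \<le> 1"
  shows "min (6 * x\<^sup>2) (u * \<bar>x\<bar>^3) \<le> 6 * (u powr \<delta> * \<bar>x\<bar> powr (2 + \<delta>))"
proof (cases "x = 0 \<or> u = 0")
  case True then show ?thesis using assms by auto
next
  case False
  then have x0: "\<bar>x\<bar> > 0" and u0: "u > 0" using assms by auto
  have split: "6 * (u powr \<delta> * \<bar>x\<bar> powr (2 + \<delta>)) = 6 * x\<^sup>2 * (u * \<bar>x\<bar>) powr \<delta>"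
    using x0 u0 by (simp add: powr_add powr_numeral powr_mult)
  show ?thesis
  proof (cases "u * \<bar>x\<bar> \<le> 1")
    case True
    have "u * \<bar>x\<bar> \<le> (u * \<bar>x\<bar>) powr \<delta>"
      using True assms x0 u0 powr_mono'[of \<delta> 1 "u * \<bar>x\<bar>"] by auto
    then have "x\<^sup>2 * (u * \<bar>x\<bar>) \<le> x\<^sup>2 * (u * \<bar>x\<bar>) powr \<delta>" by (simp add: mult_left_mono)
    then have "u * \<bar>x\<bar>^3 \<le> x\<^sup>2 * (u * \<bar>x\<bar>) powr \<delta>"
      by (simp add: power2_eq_square power3_eq_cube mult_ac)
    also have "\<dots> \<le> 6 * x\<^sup>2 * (u * \<bar>x\<bar>) powr \<delta>" by simp
    finally show ?thesis unfolding split by (rule min.coboundedI2)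
  next
    case False
    have "1 \<le> (u * \<bar>x\<bar>) powr \<delta>" using False assms by (intro ge_one_powr_ge_zero) auto
    then have "6 * x\<^sup>2 \<le> 6 * x\<^sup>2 * (u * \<bar>x\<bar>) powr \<delta>" by (simp add: mult_le_cancel_left1)
    then show ?thesis unfolding split by (rule min.coboundedI1)
  qed
qed

lemma (in real_distribution) char_power_approx:
  assumes int1: "integrable M (\<lambda>x. x)" and mean: "expectation (\<lambda>x. x) = 0"
    and int2: "integrable M (\<lambda>x. x\<^sup>2)" and var: "variance (\<lambda>x. x) = s"
    and intp: "integrable M (\<lambda>x. \<bar>x\<bar> powr (2 + \<delta>))"
    and mom: "expectation (\<lambda>x. \<bar>x\<bar> powr (2 + \<delta>)) \<le> K"
    and \<delta>: "0 < \<delta>" "\<delta> \<le> 1" and w: "\<bar>1 - u\<^sup>2 * s / 2\<bar> \<le> 1"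
  shows "cmod (char M u ^ n - complex_of_real ((1 - u\<^sup>2 * s / 2) ^ n))
           \<le> real n * u\<^sup>2 * \<bar>u\<bar> powr \<delta> * K"
proof -
  have int_min: "integrable M (\<lambda>x. min (6 * x\<^sup>2) (\<bar>u\<bar> * \<bar>x\<bar>^3))"
    by (rule Bochner_Integration.integrable_bound[where f="\<lambda>x. 6 * x\<^sup>2"]) (use int2 in auto)
  have "expectation (\<lambda>x. min (6 * x\<^sup>2) (\<bar>u\<bar> * \<bar>x\<bar>^3))
      \<le> expectation (\<lambda>x. 6 * (\<bar>u\<bar> powr \<delta> * \<bar>x\<bar> powr (2 + \<delta>)))"
    by (rule integral_mono[OF int_min]) (use intp \<delta> in \<open>auto intro!: min_square_cube_le_powr\<close>)
  also have "\<dots> \<le> 6 * \<bar>u\<bar> powr \<delta> * K" using mom by (simp add: mult_left_mono)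
  finally have remainder: "expectation (\<lambda>x. min (6 * x\<^sup>2) (\<bar>u\<bar> * \<bar>x\<bar>^3)) \<le> 6 * \<bar>u\<bar> powr \<delta> * K" .
  have "cmod (char M u - (1 - u\<^sup>2 * s / 2)) \<le> u\<^sup>2 / 6 * expectation (\<lambda>x. min (6 * x\<^sup>2) (\<bar>u\<bar> * \<bar>x\<bar>^3))"
    by (rule char_approx3[OF int1 mean int2 var])
  also have "\<dots> \<le> u\<^sup>2 / 6 * (6 * \<bar>u\<bar> powr \<delta> * K)"
    using remainder by (rule mult_left_mono) simp
  finally have taylor: "cmod (char M u - (1 - u\<^sup>2 * s / 2)) \<le> u\<^sup>2 / 6 * (6 * \<bar>u\<bar> powr \<delta> * K)" .
  have "cmod (char M u ^ n - complex_of_real (1 - u\<^sup>2 * s / 2) ^ n)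
      \<le> real n * cmod (char M u - complex_of_real (1 - u\<^sup>2 * s / 2))"
  proof (rule norm_power_diff)
    show "cmod (char M u) \<le> 1" by (rule cmod_char_le_1)
    show "cmod (complex_of_real (1 - u\<^sup>2 * s / 2)) \<le> 1" unfolding norm_of_real by (rule w)
  qed
  also have "\<dots> \<le> real n * (u\<^sup>2 / 6 * (6 * \<bar>u\<bar> powr \<delta> * K))"
    using taylor by (intro mult_left_mono) auto
  finally show ?thesis by simp
qed

lemma (in prob_space) prob_UN_le_card_mult:
  assumes "finite I" "\<And>i. i \<in> I \<Longrightarrow> A i \<in> events" "\<And>i. i \<in> I \<Longrightarrow> prob (A i) \<le> c"
  shows "prob (\<Union>i\<in>I. A i) \<le> real (card I) * c"
proof -
  have "prob (\<Union>i\<in>I. A i) \<le> (\<Sum>i\<in>I. prob (A i))"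
    using assms by (intro finite_measure_subadditive_finite) auto
  also have "\<dots> \<le> real (card I) * c" using sum_bounded_above[of I "\<lambda>i. prob (A i)" c] assms by simp
  finally show ?thesis .
qed
lemma tendsto_power_one_plus_divide:
  fixes a :: "nat \<Rightarrow> real"
  assumes lim: "a \<longlonglongrightarrow> c" and nonpos: "\<And>n. a n \<le> 0"
  shows "(\<lambda>n. (1 + a n / real n) ^ n) \<longlonglongrightarrow> exp c"
proof -
  have c: "c \<le> 0" using nonpos by (intro tendsto_upperbound[OF lim]) auto
  have "eventually (\<lambda>n. \<bar>a n\<bar> \<le> real n \<and> \<bar>c\<bar> \<le> real n \<and> 0 < n) sequentially"
  proof -
    have "eventually (\<lambda>n. dist (a n) c < 1) sequentially" using lim by (rule tendstoD) simp
    moreover have "eventually (\<lambda>n. \<bar>c\<bar> + 1 \<le> real n) sequentially"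
      by (rule eventually_sequentiallyI[of "nat \<lceil>\<bar>c\<bar> + 1\<rceil>"]) linarith
    ultimately show ?thesis by eventually_elim (auto simp: dist_real_def)
  qed
  then have "eventually (\<lambda>n. norm ((1 + a n / real n) ^ n - (1 + c / real n) ^ n) \<le> \<bar>a n - c\<bar>) sequentially"
  proof eventually_elim
    case (elim n)
    have unit: "\<bar>1 + b / real n\<bar> \<le> 1" if "b \<le> 0" "\<bar>b\<bar> \<le> real n" for b
      using that by (cases "n = 0") (auto simp: abs_if divide_le_0_iff field_simps)
    have "norm ((1 + a n / real n) ^ n - (1 + c / real n) ^ n)
        \<le> real n * norm ((1 + a n / real n) - (1 + c / real n))"
      by (rule norm_power_diff) (use unit nonpos c elim in auto)
    also have "\<dots> = \<bar>a n - c\<bar>"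
      using elim by (auto simp: diff_divide_distrib[symmetric] abs_div)
    finally show ?case .
  qed
  moreover have "(\<lambda>n. \<bar>a n - c\<bar>) \<longlonglongrightarrow> 0" using lim by (simp add: tendsto_rabs_zero LIM_zero)
  ultimately have "(\<lambda>n. (1 + a n / real n) ^ n - (1 + c / real n) ^ n) \<longlonglongrightarrow> 0"
    by (rule Lim_null_comparison)
  from tendsto_add[OF this tendsto_exp_limit_sequentially[of c]] show ?thesis by simp
qed

theorem clt_triangular_array:
  fixes M :: "nat \<Rightarrow> 'a measure" and X :: "nat \<Rightarrow> nat \<Rightarrow> 'a \<Rightarrow> real"
  assumes P: "\<And>n. prob_space (M n)"
    and ind: "\<And>n. prob_space.indep_vars (M n) (\<lambda>_. borel) (X n) {..<n}"
    and ident: "\<And>n i. i < n \<Longrightarrow> distr (M n) borel (X n i) = distr (M n) borel (X n 0)"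
    and int1: "\<And>n. 0 < n \<Longrightarrow> integrable (M n) (X n 0)"
    and mean: "\<And>n. 0 < n \<Longrightarrow> (\<integral>\<omega>. X n 0 \<omega> \<partial>M n) = 0"
    and int2: "\<And>n. 0 < n \<Longrightarrow> integrable (M n) (\<lambda>\<omega>. (X n 0 \<omega>)\<^sup>2)"
    and var: "(\<lambda>n. \<integral>\<omega>. (X n 0 \<omega>)\<^sup>2 \<partial>M n) \<longlonglongrightarrow> V" and V: "0 < V"
    and \<delta>: "0 < \<delta>" "\<delta> \<le> 1"
    and intp: "\<And>n. 0 < n \<Longrightarrow> integrable (M n) (\<lambda>\<omega>. \<bar>X n 0 \<omega>\<bar> powr (2 + \<delta>))"
    and mom: "\<And>n. 0 < n \<Longrightarrow> (\<integral>\<omega>. \<bar>X n 0 \<omega>\<bar> powr (2 + \<delta>) \<partial>M n) \<le> K"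
  shows "weak_conv_m (\<lambda>n. distr (M n) borel (\<lambda>\<omega>. (\<Sum>i<n. X n i \<omega>) / sqrt (real n * V)))
           std_normal_distribution"
proof (rule levy_continuity)
  have rv: "\<And>n i. i < n \<Longrightarrow> X n i \<in> borel_measurable (M n)"
    using ind unfolding prob_space.indep_vars_def2[OF P] by auto
  show "real_distribution (distr (M n) borel (\<lambda>\<omega>. (\<Sum>i<n. X n i \<omega>) / sqrt (real n * V)))" for n
    by (rule prob_space.real_distribution_distr[OF P]) (use rv in auto)
  show "real_distribution std_normal_distribution" by (rule real_dist_normal_dist)
  fix t :: real
  define s where "s n = (\<integral>\<omega>. (X n 0 \<omega>)\<^sup>2 \<partial>M n)" for n
  define u where "u n = t / sqrt (real n * V)" for n
  define a where "a n = - (t\<^sup>2 * s n) / (2 * V)" for n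
  define \<phi> where "\<phi> n = char (distr (M n) borel (\<lambda>\<omega>. (\<Sum>i<n. X n i \<omega>) / sqrt (real n * V))) t" for n
  have s_nonneg: "0 \<le> s n" for n unfolding s_def by simp
  have a_nonpos: "a n \<le> 0" for n unfolding a_def using s_nonneg[of n] V by simp
  have "eventually (\<lambda>n. s n < 2 * V) sequentially"
    using order_tendstoD(2)[OF var[folded s_def], of "2 * V"] V by simp
  then have "eventually (\<lambda>n. s n < 2 * V \<and> t\<^sup>2 \<le> real n \<and> 0 < n) sequentially"
    using eventually_ge_at_top[of "nat \<lceil>t\<^sup>2\<rceil> + 1"] by eventually_elim linarith
  then have approx: "eventually (\<lambda>n. norm (\<phi> n - complex_of_real ((1 + a n / real n) ^ n))
      \<le> t\<^sup>2 / V * K * \<bar>u n\<bar> powr \<delta>) sequentially"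
  proof eventually_elim
    case (elim n)
    then have n: "0 < n" and sn: "s n < 2 * V" and nt: "t\<^sup>2 \<le> real n" by auto
    interpret Mn: prob_space "M n" by (rule P)
    have rv0[measurable]: "X n 0 \<in> borel_measurable (M n)" using rv n by auto
    interpret \<mu>: real_distribution "distr (M n) borel (X n 0)" by (rule Mn.real_distribution_distr) simp
    have u2: "(u n)\<^sup>2 = t\<^sup>2 / (real n * V)" unfolding u_def using V n by (simp add: power_divide)
    have taylor_eq: "1 - (u n)\<^sup>2 * s n / 2 = 1 + a n / real n"
      unfolding u2 a_def using V n by (simp add: field_simps)
    have "\<bar>a n\<bar> \<le> t\<^sup>2" unfolding a_def using sn s_nonneg[of n] V by (simp add: abs_div abs_mult divide_le_eq mult_left_mono)
    then have "\<bar>1 - (u n)\<^sup>2 * s n / 2\<bar> \<le> 1"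
      unfolding taylor_eq using a_nonpos[of n] nt n by (auto simp: abs_if divide_le_0_iff field_simps)
    then have bound: "norm (char (distr (M n) borel (X n 0)) (u n) ^ n - complex_of_real ((1 - (u n)\<^sup>2 * s n / 2) ^ n))
        \<le> real n * (u n)\<^sup>2 * \<bar>u n\<bar> powr \<delta> * K"
      using int1[OF n] mean[OF n] int2[OF n] intp[OF n] mom[OF n] \<delta>
      by (intro \<mu>.char_power_approx) (simp_all add: integrable_distr_eq integral_distr s_def)
    have phi_eq: "\<phi> n = char (distr (M n) borel (X n 0)) (u n) ^ n"
      unfolding \<phi>_def u_def by (rule char_iid_sum_divide[OF P ind ident])
    have scale: "t\<^sup>2 / V * K * \<bar>u n\<bar> powr \<delta> = real n * (u n)\<^sup>2 * \<bar>u n\<bar> powr \<delta> * K"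
      unfolding u2 using n V by (simp add: field_simps)
    show ?case unfolding phi_eq scale using bound[unfolded taylor_eq] .
  qed
  have "u \<longlonglongrightarrow> 0"
    unfolding u_def using V
    by (auto intro!: tendsto_divide_0[OF tendsto_const] filterlim_at_top_imp_at_infinity
        sqrt_at_top[THEN filterlim_compose] filterlim_at_top_mult_tendsto_pos filterlim_real_sequentially)
  then have "(\<lambda>n. \<bar>u n\<bar> powr \<delta>) \<longlonglongrightarrow> 0"
    by (intro tendsto_zero_powrI tendsto_rabs_zero) (use \<delta> in auto)
  then have "(\<lambda>n. \<phi> n - complex_of_real ((1 + a n / real n) ^ n)) \<longlonglongrightarrow> 0"
    by (intro Lim_null_comparison[OF approx] tendsto_mult_right_zero)
  moreover have "(\<lambda>n. complex_of_real ((1 + a n / real n) ^ n)) \<longlonglongrightarrow> complex_of_real (exp (- t\<^sup>2 / 2))"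
  proof (intro tendsto_of_real tendsto_power_one_plus_divide a_nonpos)
    have "(\<lambda>n. - (t\<^sup>2 * s n) / (2 * V)) \<longlonglongrightarrow> - (t\<^sup>2 * V) / (2 * V)"
      using var[folded s_def] V by (intro tendsto_intros) auto
    then show "a \<longlonglongrightarrow> - t\<^sup>2 / 2" unfolding a_def using V by simp
  qed
  ultimately have "\<phi> \<longlonglongrightarrow> complex_of_real (exp (- t\<^sup>2 / 2))"
    using tendsto_add by fastforce
  then show "(\<lambda>n. char (distr (M n) borel (\<lambda>\<omega>. (\<Sum>i<n. X n i \<omega>) / sqrt (real n * V))) t)
      \<longlonglongrightarrow> char std_normal_distribution t"
    unfolding \<phi>_def char_std_normal_distribution by simp
qed
lemma isCont_std_normal_cdf: "isCont (cdf std_normal_distribution) c"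
proof -
  interpret real_distribution std_normal_distribution by (rule real_dist_normal_dist)
  have "emeasure std_normal_distribution {c} = 0"
    by (simp add: emeasure_density)
  then show ?thesis by (simp add: isCont_cdf measure_def)
qed

lemma cdf_normal_density:
  assumes b: "0 < b"
  shows "cdf (density lborel (normal_density a b)) x = cdf std_normal_distribution ((x - a) / b)"
proof -
  let ?N = "std_normal_distribution"
  interpret N: prob_space ?N by (rule prob_space_normal_density) simp
  have "distributed ?N lborel (\<lambda>x. x) std_normal_density"
    unfolding distributed_def by (auto simp: distr_id2)
  then have "distributed ?N lborel (\<lambda>x. a + b * x) (normal_density (a + b * 0) (\<bar>b\<bar> * 1))"
    by (rule N.normal_density_affine) (use b in auto)
  then have affine: "distr ?N lborel (\<lambda>x. a + b * x) = density lborel (normal_density a b)"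
    using b unfolding distributed_def by simp
  have "cdf (density lborel (normal_density a b)) x = measure ?N ((\<lambda>y. a + b * y) -` {..x} \<inter> space ?N)"
    unfolding affine[symmetric] cdf_def2 by (rule measure_distr) auto
  also have "(\<lambda>y. a + b * y) -` {..x} \<inter> space ?N = {..(x - a) / b}"
    using b by (auto simp: field_simps)
  finally show ?thesis unfolding cdf_def2 .
qed

lemma (in prob_space) prob_le_if_close:
  fixes U W :: "'a \<Rightarrow> real" and a b h x :: real
  assumes [measurable]: "U \<in> borel_measurable M" "W \<in> borel_measurable M" and b: "0 < b"
  defines "far \<equiv> {\<omega> \<in> space M. b * h < \<bar>W \<omega> - (a + b * U \<omega>)\<bar>}"
  shows "prob {\<omega> \<in> space M. W \<omega> \<le> x} \<le> prob {\<omega> \<in> space M. U \<omega> \<le> (x - a) / b + h} + prob far"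
    and "prob {\<omega> \<in> space M. U \<omega> \<le> (x - a) / b - h} \<le> prob {\<omega> \<in> space M. W \<omega> \<le> x} + prob far"
proof -
  have far[measurable]: "far \<in> events" unfolding far_def by measurable
  have le_plus_far: "prob A \<le> prob B + prob far" if "A \<subseteq> B \<union> far" "B \<in> events" for A B
  proof -
    have "prob A \<le> prob (B \<union> far)" using that far by (intro finite_measure_mono) auto
    also have "\<dots> \<le> prob B + prob far" using that far by (intro measure_subadditive) auto
    finally show ?thesis .
  qed
  have near: "\<bar>W \<omega> - (a + b * U \<omega>)\<bar> \<le> b * h" if "\<omega> \<in> space M" "\<omega> \<notin> far" for \<omega>
    using that unfolding far_def by auto
  have "{\<omega> \<in> space M. W \<omega> \<le> x} \<subseteq> {\<omega> \<in> space M. U \<omega> \<le> (x - a) / b + h} \<union> far"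
    using near b by (force simp: field_simps)
  then show "prob {\<omega> \<in> space M. W \<omega> \<le> x} \<le> prob {\<omega> \<in> space M. U \<omega> \<le> (x - a) / b + h} + prob far"
    by (rule le_plus_far) measurable
  have "{\<omega> \<in> space M. U \<omega> \<le> (x - a) / b - h} \<subseteq> {\<omega> \<in> space M. W \<omega> \<le> x} \<union> far"
    using near b by (force simp: field_simps)
  then show "prob {\<omega> \<in> space M. U \<omega> \<le> (x - a) / b - h} \<le> prob {\<omega> \<in> space M. W \<omega> \<le> x} + prob far"
    by (rule le_plus_far) measurable
qed

theorem slutsky_affine_normal:
  fixes M :: "nat \<Rightarrow> 'a measure" and U W :: "nat \<Rightarrow> 'a \<Rightarrow> real"
  assumes P: "\<And>n. prob_space (M n)"
    and meas: "\<And>n. U n \<in> borel_measurable (M n)" "\<And>n. W n \<in> borel_measurable (M n)"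
    and clt: "weak_conv_m (\<lambda>n. distr (M n) borel (U n)) std_normal_distribution"
    and b: "0 < b"
    and close: "\<And>d p. 0 < d \<Longrightarrow> 0 < p \<Longrightarrow>
       eventually (\<lambda>n. measure (M n) {\<omega> \<in> space (M n). d < \<bar>W n \<omega> - (a + b * U n \<omega>)\<bar>} \<le> p) sequentially"
  shows "weak_conv_m (\<lambda>n. distr (M n) borel (W n)) (density lborel (normal_density a b))"
  unfolding weak_conv_m_def weak_conv_def
proof (intro allI impI)
  fix x :: real
  define \<Phi> where "\<Phi> = cdf std_normal_distribution"
  define c where "c = (x - a) / b"
  have cdf_eq: "cdf (distr (M n) borel f) y = measure (M n) {\<omega> \<in> space (M n). f \<omega> \<le> y}"
    if "f \<in> borel_measurable (M n)" for f n y
    unfolding cdf_def2 using that by (subst measure_distr) (auto intro!: arg_cong[where f="measure (M n)"])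
  have U_lim: "(\<lambda>n. measure (M n) {\<omega> \<in> space (M n). U n \<omega> \<le> y}) \<longlonglongrightarrow> \<Phi> y" for y
    using clt isCont_std_normal_cdf unfolding weak_conv_m_def weak_conv_def \<Phi>_def cdf_eq[OF meas(1)]
    by blast
  have "(\<lambda>n. measure (M n) {\<omega> \<in> space (M n). W n \<omega> \<le> x}) \<longlonglongrightarrow> \<Phi> c"
  proof (rule tendstoI)
    fix e :: real assume e: "0 < e"
    obtain h where h: "0 < h" "\<bar>\<Phi> (c + h) - \<Phi> c\<bar> < e / 4" "\<bar>\<Phi> (c - h) - \<Phi> c\<bar> < e / 4"
    proof -
      obtain s where "0 < s" "\<And>y. y \<noteq> c \<and> norm (y - c) < s \<Longrightarrow> norm (\<Phi> y - \<Phi> c) < e / 4"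
        using LIM_D[OF isCont_std_normal_cdf[of c, unfolded isCont_def], of "e / 4"] e
        unfolding \<Phi>_def by auto
      then show ?thesis using that[of "s / 2"] by simp
    qed
    have "eventually (\<lambda>n. measure (M n) {\<omega> \<in> space (M n). U n \<omega> \<le> c + h} < \<Phi> (c + h) + e / 4
        \<and> \<Phi> (c - h) - e / 4 < measure (M n) {\<omega> \<in> space (M n). U n \<omega> \<le> c - h}
        \<and> measure (M n) {\<omega> \<in> space (M n). b * h < \<bar>W n \<omega> - (a + b * U n \<omega>)\<bar>} \<le> e / 4) sequentially"
      using order_tendstoD(2)[OF U_lim[of "c + h"], of "\<Phi> (c + h) + e / 4"]
        order_tendstoD(1)[OF U_lim[of "c - h"], of "\<Phi> (c - h) - e / 4"]
        close[of "b * h" "e / 4"] b h e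
      by (intro eventually_conj) auto
    then show "eventually (\<lambda>n. dist (measure (M n) {\<omega> \<in> space (M n). W n \<omega> \<le> x}) (\<Phi> c) < e) sequentially"
    proof eventually_elim
      case (elim n)
      interpret prob_space "M n" by (rule P)
      note sandwich = prob_le_if_close[OF meas(1,2) b, where a=a and h=h and x=x, folded c_def]
      show ?case using sandwich elim h unfolding dist_real_def by linarith
    qed
  qed
  then show "(\<lambda>n. cdf (distr (M n) borel (W n)) x) \<longlonglongrightarrow> cdf (density lborel (normal_density a b)) x"
    unfolding cdf_eq[OF meas(2)] cdf_normal_density[OF b] \<Phi>_def c_def .
qed
section \<open>Sample moment matrices\<close>

lemma ZtZ_nth: "ZtZ n z $ j $ k = (\<Sum>i<n. z i $ j * z i $ k)"
  unfolding ZtZ_def outer_def by (simp add: sum_component)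

lemma Zt_nth: "Zt n z a $ j = (\<Sum>i<n. a i * z i $ j)"
  unfolding Zt_def by (simp add: sum_component)

lemma ZtZ_sym: "ZtZ n z $ j $ k = ZtZ n z $ k $ j"
  unfolding ZtZ_nth by (simp add: mult.commute)

lemma Zt_add: "Zt n z (\<lambda>i. a i + b i) = Zt n z a + Zt n z b"
  unfolding Zt_def by (simp add: scaleR_add_left sum.distrib)

lemma Zt_scale: "Zt n z (\<lambda>i. c * a i) = c *\<^sub>R Zt n z a"
  unfolding Zt_def by (simp add: scaleR_sum_right)

lemma inner_Zt: "p \<bullet> Zt n z a = (\<Sum>i<n. a i * (z i \<bullet> p))"
  unfolding Zt_def by (simp add: inner_sum_right inner_commute)

lemma ZtZ_mult_vector: "ZtZ n z *v p = Zt n z (\<lambda>i. z i \<bullet> p)"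
  by (simp add: vec_eq_iff matrix_vector_mult_def ZtZ_nth Zt_nth inner_vec_def
      sum_distrib_right sum_distrib_left mult.commute mult.left_commute) (subst sum.swap, simp add: mult.commute mult.left_commute)

lemma inner_ZtZ_mult_vector: "p \<bullet> (ZtZ n z *v p) = (\<Sum>i<n. (z i \<bullet> p)\<^sup>2)"
  unfolding ZtZ_mult_vector inner_Zt by (simp add: power2_eq_square)

lemma inner_matrix_vector_sym:
  fixes A :: "real^'k^'k"
  assumes "\<And>j k. A $ j $ k = A $ k $ j"
  shows "(A *v p) \<bullet> q = p \<bullet> (A *v q)"
proof -
  have "(A *v p) \<bullet> q = (\<Sum>j\<in>UNIV. \<Sum>k\<in>UNIV. A $ j $ k * p $ k * q $ j)"
    by (simp add: inner_vec_def matrix_vector_mult_def sum_distrib_right sum_distrib_left ac_simps)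
  also have "\<dots> = (\<Sum>k\<in>UNIV. \<Sum>j\<in>UNIV. A $ k $ j * p $ k * q $ j)"
    by (subst sum.swap) (simp add: assms)
  also have "\<dots> = p \<bullet> (A *v q)"
    by (simp add: inner_vec_def matrix_vector_mult_def sum_distrib_left mult.commute mult.left_commute)
  finally show ?thesis .
qed

lemma matrix_inv_mat_1:
  fixes A :: "real^'k^'k"
  assumes "invertible A"
  shows "A ** matrix_inv A = mat 1" "matrix_inv A ** A = mat 1"
proof -
  have "\<exists>A'. A ** A' = mat 1 \<and> A' ** A = mat 1" using assms unfolding invertible_def by blast
  then have "A ** matrix_inv A = mat 1 \<and> matrix_inv A ** A = mat 1"
    unfolding matrix_inv_def by (rule someI_ex)
  then show "A ** matrix_inv A = mat 1" "matrix_inv A ** A = mat 1" by auto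
qed

lemma matrix_inv_cancel:
  fixes A :: "real^'k^'k"
  assumes "invertible A"
  shows "A *v (matrix_inv A *v b) = b" "matrix_inv A *v (A *v b) = b"
  using matrix_inv_mat_1[OF assms] by (simp_all add: matrix_vector_mul_assoc)

lemma invertible_if_coercive:
  fixes A :: "real^'k^'k"
  assumes c: "0 < c" and q: "\<And>u. c * (norm u)\<^sup>2 \<le> u \<bullet> (A *v u)"
  shows "invertible A" "norm (matrix_inv A *v b) \<le> norm b / c"
proof -
  have inj: "inj ((*v) A)"
  proof (rule linear_inj_on_iff_eq_0[THEN iffD2])
    show "linear ((*v) A)" by (rule matrix_vector_mul_linear)
    show "\<forall>x\<in>UNIV. A *v x = 0 \<longrightarrow> x = 0"
    proof (intro ballI impI)
      fix x assume "A *v x = 0"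
      then have "c * (norm x)\<^sup>2 \<le> 0" using q[of x] by simp
      then show "x = 0" using c by (simp add: mult_le_0_iff)
    qed
  qed (simp add: subspace_UNIV)
  then have "surj ((*v) A)" by (intro linear_inj_imp_surj matrix_vector_mul_linear)
  then show inv: "invertible A" using inj by (simp add: invertible_eq_bij bij_def)
  define y where "y = matrix_inv A *v b"
  have Ay: "A *v y = b" unfolding y_def by (rule matrix_inv_cancel(1)[OF inv])
  have "c * (norm y)\<^sup>2 \<le> y \<bullet> b" using q[of y] Ay by simp
  also have "\<dots> \<le> norm y * norm b" by (rule norm_cauchy_schwarz)
  finally have *: "c * (norm y)\<^sup>2 \<le> norm y * norm b" .
  show "norm (matrix_inv A *v b) \<le> norm b / c"
  proof (cases "y = 0")
    case True then show ?thesis using c unfolding y_def by simp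
  next
    case False
    then have ny: "norm y > 0" by simp
    from * have "(c * norm y) * norm y \<le> norm b * norm y" by (simp add: power2_eq_square mult.commute mult.left_commute)
    then have "c * norm y \<le> norm b" using ny by simp
    then show ?thesis using c unfolding y_def[symmetric] by (simp add: field_simps)
  qed
qed

lemma pos_def_mat_coercive:
  fixes Q :: "real^'k^'k"
  assumes "pos_def_mat Q"
  shows "\<exists>lam>0. \<forall>u. lam * (norm u)\<^sup>2 \<le> u \<bullet> (Q *v u)"
proof -
  let ?f = "\<lambda>u::real^'k. u \<bullet> (Q *v u)"
  have ne: "sphere (0::real^'k) 1 \<noteq> {}" by simp
  have cont: "continuous_on (sphere 0 1) ?f"
  proof -
    have bl: "bounded_linear ((*v) Q)" using matrix_vector_mul_linear[of Q] linear_linear by blast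
    have "continuous_on (sphere 0 1) ((*v) Q)" by (rule linear_continuous_on[OF bl])
    then show ?thesis by (intro continuous_intros)
  qed
  obtain x0 where x0: "x0 \<in> sphere 0 1" "\<And>y. y \<in> sphere 0 1 \<Longrightarrow> ?f x0 \<le> ?f y"
    using continuous_attains_inf[OF compact_sphere ne cont] by blast
  have "x0 \<noteq> 0" using x0(1) by auto
  then have pos: "?f x0 > 0" using assms unfolding pos_def_mat_def by blast
  have "?f x0 * (norm u)\<^sup>2 \<le> ?f u" for u
  proof (cases "u = 0")
    case True then show ?thesis by simp
  next
    case False
    let ?v = "(1 / norm u) *\<^sub>R u"
    have "?v \<in> sphere 0 1" using False by simp
    then have "?f x0 \<le> ?f ?v" by (rule x0(2))
    also have "?f ?v = ?f u / (norm u)\<^sup>2"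
      by (simp add: matrix_vector_mult_scaleR power2_eq_square)
    finally show ?thesis using False by (simp add: field_simps)
  qed
  then show ?thesis using pos by blast
qed

lemma quadratic_form_perturb:
  fixes A Q :: "real^'k^'k"
  assumes "\<And>j k. \<bar>r * A $ j $ k - Q $ j $ k\<bar> \<le> eps"
  shows "\<bar>r * (u \<bullet> (A *v u)) - u \<bullet> (Q *v u)\<bar> \<le> (real CARD('k))^2 * eps * (norm u)\<^sup>2"
proof -
  have e: "0 \<le> eps" using assms[of undefined undefined] by linarith
  have "r * (u \<bullet> (A *v u)) - u \<bullet> (Q *v u) = (\<Sum>j\<in>UNIV. \<Sum>k\<in>UNIV. u $ j * (r * A $ j $ k - Q $ j $ k) * u $ k)"
    by (simp add: inner_vec_def matrix_vector_mult_def sum_distrib_left sum_subtractf[symmetric]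
        algebra_simps)
  also have "\<bar>\<dots>\<bar> \<le> (\<Sum>j\<in>(UNIV::'k set). \<Sum>k\<in>(UNIV::'k set). eps * (norm u)\<^sup>2)"
  proof -
    have "\<bar>u $ j * (r * A $ j $ k - Q $ j $ k) * u $ k\<bar> \<le> eps * (norm u)\<^sup>2" for j k
    proof -
      have "\<bar>u $ j * (r * A $ j $ k - Q $ j $ k) * u $ k\<bar>
          = \<bar>r * A $ j $ k - Q $ j $ k\<bar> * (\<bar>u $ j\<bar> * \<bar>u $ k\<bar>)" by (simp add: abs_mult)
      also have "\<dots> \<le> eps * (norm u * norm u)"
        using assms e by (intro mult_mono component_le_norm_cart) auto
      finally show ?thesis by (simp add: power2_eq_square)
    qed
    then have prev: "\<forall>j. \<bar>\<Sum>k\<in>UNIV. u $ j * (r * A $ j $ k - Q $ j $ k) * u $ k\<bar> \<le> (\<Sum>k\<in>(UNIV::'k set). eps * (norm u)\<^sup>2)"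
      by (intro allI order_trans[OF sum_abs] sum_mono) auto
    have "\<bar>\<Sum>j\<in>UNIV. \<Sum>k\<in>UNIV. u $ j * (r * A $ j $ k - Q $ j $ k) * u $ k\<bar>
       \<le> (\<Sum>j\<in>UNIV. \<bar>\<Sum>k\<in>UNIV. u $ j * (r * A $ j $ k - Q $ j $ k) * u $ k\<bar>)" by (rule sum_abs)
    also have "\<dots> \<le> (\<Sum>j\<in>(UNIV::'k set). \<Sum>k\<in>(UNIV::'k set). eps * (norm u)\<^sup>2)"
      by (rule sum_mono) (use prev in blast)
    finally show ?thesis .
  qed
  also have "\<dots> = (real CARD('k))^2 * eps * (norm u)\<^sup>2" by (simp add: power2_eq_square)
  finally show ?thesis .
qed

lemma norm_le_card_mult:
  fixes x :: "real^'k"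
  assumes "\<And>j. \<bar>x $ j\<bar> \<le> c"
  shows "norm x \<le> real CARD('k) * c"
proof -
  have "norm x \<le> (\<Sum>j\<in>UNIV. \<bar>x $ j\<bar>)" by (rule norm_le_l1_cart)
  also have "\<dots> \<le> (\<Sum>j\<in>(UNIV::'k set). c)" by (rule sum_mono) (rule assms)
  finally show ?thesis by simp
qed

lemma coercive_if_entrywise_close:
  fixes A Q :: "real^'k^'k"
  assumes r: "0 < r" and coercive: "\<And>u. lam * (norm u)\<^sup>2 \<le> u \<bullet> (Q *v u)"
    and close: "\<And>j k. \<bar>A $ j $ k / r - Q $ j $ k\<bar> \<le> e"
    and e: "(real CARD('k))\<^sup>2 * e \<le> lam / 2"
  shows "r * (lam / 2) * (norm u)\<^sup>2 \<le> u \<bullet> (A *v u)"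
proof -
  have "\<bar>(1 / r) * (u \<bullet> (A *v u)) - u \<bullet> (Q *v u)\<bar> \<le> (real CARD('k))\<^sup>2 * e * (norm u)\<^sup>2"
    by (rule quadratic_form_perturb) (use close in simp)
  moreover have "(real CARD('k))\<^sup>2 * e * (norm u)\<^sup>2 \<le> lam / 2 * (norm u)\<^sup>2"
    using e by (intro mult_right_mono) auto
  ultimately have "lam / 2 * (norm u)\<^sup>2 \<le> (1 / r) * (u \<bullet> (A *v u))"
    using coercive[of u] by linarith
  then show ?thesis using r by (simp add: field_simps)
qed
section \<open>The statistic and its deterministic approximation\<close>

lemma tau_hat_closed_form:
  fixes z :: "nat \<Rightarrow> real^'k" and v e :: "nat \<Rightarrow> real" and p :: "real^'k" and n :: nat and \<beta> :: real
  defines "A \<equiv> ZtZ n z" and "w \<equiv> Zt n z v" and "b \<equiv> Zt n z e"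
  assumes inv: "invertible A"
    and D: "p \<bullet> (A *v p) + 2 * (p \<bullet> w) + w \<bullet> (matrix_inv A *v w) \<noteq> 0"
  shows "tau_hat n z (\<lambda>i. z i \<bullet> p + v i) (\<lambda>i. \<beta> * (z i \<bullet> p + v i) + e i) =
     ((p \<bullet> b + (\<Sum>i<n. v i * e i)) - (\<Sum>i<n. (z i \<bullet> p + v i)\<^sup>2) * (p \<bullet> b + w \<bullet> (matrix_inv A *v b))
        / (p \<bullet> (A *v p) + 2 * (p \<bullet> w) + w \<bullet> (matrix_inv A *v w))) / sqrt (real n)"
proof -
  define Ai where "Ai = matrix_inv A"
  define x where "x i = z i \<bullet> p + v i" for i
  define y where "y i = \<beta> * x i + e i" for i
  define pxx where "pxx = p \<bullet> (A *v p) + 2 * (p \<bullet> w) + w \<bullet> (Ai *v w)"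
  define pxe where "pxe = p \<bullet> b + w \<bullet> (Ai *v b)"
  have sym: "\<And>j k. A $ j $ k = A $ k $ j" unfolding A_def by (rule ZtZ_sym)
  have AAi: "\<And>q. A *v (Ai *v q) = q" "\<And>q. Ai *v (A *v q) = q"
    unfolding Ai_def using matrix_inv_cancel[OF inv] by auto
  have Ztx: "Zt n z x = A *v p + w"
    unfolding x_def A_def w_def ZtZ_mult_vector by (rule Zt_add)
  have Zty: "Zt n z y = \<beta> *\<^sub>R (A *v p + w) + b"
    unfolding y_def b_def using Zt_add[of n z "\<lambda>i. \<beta> * x i" e] Zt_scale[of n z \<beta> x] Ztx by simp
  have key: "(A *v p + w) \<bullet> (Ai *v q) = p \<bullet> q + w \<bullet> (Ai *v q)" for q
    using inner_matrix_vector_sym[of A p "Ai *v q", OF sym] AAi by (simp add: inner_add_left)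
  have pf: "projform n z x a = (A *v p + w) \<bullet> (Ai *v Zt n z a)" for a
    unfolding projform_def using inv Ztx by (simp add: A_def Ai_def)
  have pxx_eq: "projform n z x x = pxx"
  proof -
    have "projform n z x x = (A *v p + w) \<bullet> (Ai *v (A *v p + w))" using pf Ztx by simp
    also have "\<dots> = p \<bullet> (A *v p + w) + w \<bullet> (Ai *v (A *v p + w))" by (rule key)
    also have "\<dots> = p \<bullet> (A *v p) + 2 * (p \<bullet> w) + w \<bullet> (Ai *v w)"
      by (simp add: matrix_vector_right_distrib inner_add_right AAi inner_commute)
    finally show ?thesis unfolding pxx_def .
  qed
  have pxy_eq: "projform n z x y = \<beta> * pxx + pxe"
  proof -
    have "projform n z x y = (A *v p + w) \<bullet> (Ai *v (\<beta> *\<^sub>R (A *v p + w) + b))" using pf Zty by simp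
    also have "\<dots> = \<beta> * ((A *v p + w) \<bullet> (Ai *v (A *v p + w))) + (A *v p + w) \<bullet> (Ai *v b)"
      by (simp add: matrix_vector_right_distrib inner_add_right matrix_vector_mult_scaleR)
    also have "(A *v p + w) \<bullet> (Ai *v (A *v p + w)) = pxx" using pxx_eq pf Ztx by simp
    also have "(A *v p + w) \<bullet> (Ai *v b) = pxe" unfolding pxe_def by (rule key)
    finally show ?thesis .
  qed
  have pxx0: "pxx \<noteq> 0" using D unfolding pxx_def Ai_def .
  have bt: "beta_tsls n z x y = \<beta> + pxe / pxx"
    unfolding beta_tsls_def pxx_eq pxy_eq using pxx0 by (simp add: field_simps)
  have sxe: "(\<Sum>i<n. x i * e i) = p \<bullet> b + (\<Sum>i<n. v i * e i)"
    unfolding b_def inner_Zt x_def by (simp add: algebra_simps sum.distrib)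
  have "(\<Sum>i<n. x i * (y i - x i * beta_tsls n z x y)) = (\<Sum>i<n. x i * e i) - (\<Sum>i<n. (x i)\<^sup>2) * (pxe / pxx)"
    unfolding bt y_def by (simp add: algebra_simps power2_eq_square sum.distrib sum_subtractf sum_distrib_right sum_distrib_left sum_divide_distrib)
  then show ?thesis
    unfolding tau_hat_def x_def[symmetric] y_def[symmetric] using sxe
    by (simp add: pxe_def pxx_def Ai_def)
qed

lemma ratio_perturb_bound:
  fixes g sx P PK rho R Dn ED ah EA :: real
  assumes g: "0 < g" and sx: "0 \<le> sx"
    and hP: "\<bar>P\<bar> \<le> PK" and hr: "\<bar>rho\<bar> \<le> R"
    and hD: "\<bar>Dn - g\<bar> \<le> ED" and ED: "ED \<le> g / 2"
    and hA: "\<bar>ah - sx\<bar> \<le> EA" and EA: "EA \<le> 1"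
  shows "\<bar>sx / g * P - ah * (P + rho) / Dn\<bar> \<le> PK * 2 * (sx * ED + g * EA) / g\<^sup>2 + (sx + 1) * R * 2 / g"
proof -
  have Dn: "g / 2 \<le> Dn" using hD ED by linarith
  have Dpos: "0 < Dn" using Dn g by linarith
  have eq: "sx / g * P - ah * (P + rho) / Dn = P * ((sx * Dn - ah * g) / (g * Dn)) - ah * rho / Dn"
    using g Dpos by (simp add: field_simps)
  have n1: "\<bar>sx * Dn - ah * g\<bar> \<le> sx * ED + g * EA"
  proof -
    have "sx * Dn - ah * g = sx * (Dn - g) + g * (sx - ah)" by (simp add: algebra_simps)
    then have "\<bar>sx * Dn - ah * g\<bar> \<le> \<bar>sx * (Dn - g)\<bar> + \<bar>g * (sx - ah)\<bar>" by linarith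
    also have "\<dots> = sx * \<bar>Dn - g\<bar> + g * \<bar>ah - sx\<bar>" using sx g by (simp add: abs_mult abs_minus_commute)
    also have "\<dots> \<le> sx * ED + g * EA" using sx g hD hA by (intro add_mono mult_left_mono) auto
    finally show ?thesis .
  qed
  have inv1: "1 / (g * Dn) \<le> 2 / g\<^sup>2"
    using g Dn Dpos by (simp add: field_simps power2_eq_square)
  have t1: "\<bar>P * ((sx * Dn - ah * g) / (g * Dn))\<bar> \<le> PK * ((sx * ED + g * EA) * (2 / g\<^sup>2))"
  proof -
    have "\<bar>(sx * Dn - ah * g) / (g * Dn)\<bar> = \<bar>sx * Dn - ah * g\<bar> * (1 / (g * Dn))"
      using g Dpos by (simp add: abs_div)
    also have "\<dots> \<le> (sx * ED + g * EA) * (2 / g\<^sup>2)"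
      using n1 inv1 g Dpos by (intro mult_mono) auto
    finally have "\<bar>(sx * Dn - ah * g) / (g * Dn)\<bar> \<le> (sx * ED + g * EA) * (2 / g\<^sup>2)" .
    then show ?thesis unfolding abs_mult using hP by (intro mult_mono) auto
  qed
  have t2: "\<bar>ah * rho / Dn\<bar> \<le> (sx + 1) * R * (2 / g)"
  proof -
    have a: "\<bar>ah\<bar> \<le> sx + 1" using hA EA sx by linarith
    have "\<bar>ah * rho / Dn\<bar> = \<bar>ah\<bar> * \<bar>rho\<bar> * (1 / Dn)" using Dpos by (simp add: abs_mult abs_div)
    also have "\<dots> \<le> (sx + 1) * R * (2 / g)"
    proof (rule mult_mono)
      show "\<bar>ah\<bar> * \<bar>rho\<bar> \<le> (sx + 1) * R" using a hr sx by (intro mult_mono) auto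
      show "1 / Dn \<le> 2 / g" using Dn g Dpos by (simp add: field_simps)
      show "0 \<le> (sx + 1) * R" using sx hr by (intro mult_nonneg_nonneg) auto
    qed (use Dpos in auto)
    finally show ?thesis .
  qed
  have "\<bar>sx / g * P - ah * (P + rho) / Dn\<bar> \<le> \<bar>P * ((sx * Dn - ah * g) / (g * Dn))\<bar> + \<bar>ah * rho / Dn\<bar>"
    unfolding eq by (rule abs_triangle_ineq4)
  also have "\<dots> \<le> PK * ((sx * ED + g * EA) * (2 / g\<^sup>2)) + (sx + 1) * R * (2 / g)" using t1 t2 by linarith
  also have "\<dots> = PK * 2 * (sx * ED + g * EA) / g\<^sup>2 + (sx + 1) * R * 2 / g" by simp
  finally show ?thesis .
qed

lemma tau_hat_normalized:
  fixes z :: "nat \<Rightarrow> real^'k" and v e :: "nat \<Rightarrow> real" and p :: "real^'k" and n :: nat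
  defines "A \<equiv> ZtZ n z" and "w \<equiv> Zt n z v" and "b \<equiv> Zt n z e"
  defines "D \<equiv> (p \<bullet> (A *v p) + 2 * (p \<bullet> w) + w \<bullet> (matrix_inv A *v w)) / real n"
    and "S \<equiv> (\<Sum>i<n. (z i \<bullet> p + v i)\<^sup>2) / real n"
    and "P \<equiv> p \<bullet> b / sqrt (real n)" and "\<rho> \<equiv> w \<bullet> (matrix_inv A *v b) / sqrt (real n)"
  assumes n: "0 < n" and inv: "invertible A" and D: "D \<noteq> 0"
  shows "tau_hat n z (\<lambda>i. z i \<bullet> p + v i) (\<lambda>i. \<beta> * (z i \<bullet> p + v i) + e i)
           = P + (\<Sum>i<n. v i * e i) / sqrt (real n) - S * (P + \<rho>) / D"
proof -
  have D0: "p \<bullet> (A *v p) + 2 * (p \<bullet> w) + w \<bullet> (matrix_inv A *v w) \<noteq> 0"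
    using D unfolding D_def by simp
  have normalize: "((a + s) - X * (a + r) / d) / sn = a / sn + s / sn - (X / rn) * (a / sn + r / sn) / (d / rn)"
    if "d \<noteq> 0" "rn \<noteq> 0" "sn \<noteq> 0" for a s X r d rn sn :: real
    using that by (simp add: field_simps)
  show ?thesis
    unfolding tau_hat_closed_form[OF inv[unfolded A_def] D0[unfolded A_def w_def]]
    unfolding A_def[symmetric] w_def[symmetric] b_def[symmetric] D_def S_def P_def \<rho>_def
    by (rule normalize) (use n D0 in auto)
qed

lemma gram_terms_close:
  fixes zz :: "nat \<Rightarrow> real^'k" and vv :: "nat \<Rightarrow> real" and p :: "real^'k" and n :: nat
  defines "A \<equiv> ZtZ n zz" and "w \<equiv> Zt n zz vv" and "kk \<equiv> real CARD('k)"
  assumes n: "0 < n" and lam: "0 < lam"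
    and inv_bound: "\<And>q. norm (matrix_inv A *v q) \<le> norm q / (real n * (lam / 2))"
    and g: "g2 = p \<bullet> (Q *v p)" and sx: "sx2 = g2 + sv2" and e: "0 < e" "e \<le> 1"
    and hA: "\<And>j k. \<bar>A $ j $ k / real n - Q $ j $ k\<bar> \<le> e"
    and hW: "\<And>j. \<bar>w $ j / real n\<bar> \<le> e"
    and hV: "\<bar>(\<Sum>i<n. (vv i)\<^sup>2) / real n - sv2\<bar> \<le> e"
  shows "\<bar>(p \<bullet> (A *v p) + 2 * (p \<bullet> w) + w \<bullet> (matrix_inv A *v w)) / real n - g2\<bar>
           \<le> e * (kk\<^sup>2 * (norm p)\<^sup>2 + 2 * norm p * kk + 2 * kk\<^sup>2 / lam)"
    and "\<bar>(\<Sum>i<n. (zz i \<bullet> p + vv i)\<^sup>2) / real n - sx2\<bar> \<le> e * (kk\<^sup>2 * (norm p)\<^sup>2 + 2 * norm p * kk + 1)"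
proof -
  define rn where "rn = real n"
  have rn: "0 < rn" using n unfolding rn_def by simp
  have kk: "1 \<le> kk" unfolding kk_def by (simp add: Suc_le_eq)
  have nw: "norm w \<le> kk * (rn * e)"
    unfolding kk_def using hW rn by (intro norm_le_card_mult) (simp add: abs_div field_simps rn_def)
  have quad: "\<bar>p \<bullet> (A *v p) / rn - g2\<bar> \<le> kk\<^sup>2 * e * (norm p)\<^sup>2"
    using quadratic_form_perturb[of "1 / rn" A Q e p] hA unfolding g kk_def rn_def by simp
  have cross: "\<bar>p \<bullet> w / rn\<bar> \<le> norm p * kk * e"
  proof -
    have "\<bar>p \<bullet> w\<bar> \<le> norm p * (kk * (rn * e))"
      using Cauchy_Schwarz_ineq2[of p w] nw by (meson mult_left_mono norm_ge_zero order_trans)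
    then show ?thesis using rn by (simp add: abs_div field_simps)
  qed
  have inverse: "\<bar>w \<bullet> (matrix_inv A *v w) / rn\<bar> \<le> 2 * kk\<^sup>2 * e / lam"
  proof -
    have "\<bar>w \<bullet> (matrix_inv A *v w)\<bar> \<le> norm w * (norm w / (rn * (lam / 2)))"
      using Cauchy_Schwarz_ineq2[of w] inv_bound[of w] unfolding rn_def
      by (meson mult_left_mono norm_ge_zero order_trans)
    also have "\<dots> \<le> (kk * (rn * e)) * ((kk * (rn * e)) / (rn * (lam / 2)))"
      using nw rn lam kk e by (intro mult_mono divide_right_mono) auto
    also have "\<dots> = rn * (2 * kk\<^sup>2 * e\<^sup>2 / lam)" using rn lam by (simp add: field_simps power2_eq_square)
    also have "\<dots> \<le> rn * (2 * kk\<^sup>2 * e / lam)"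
      using e rn lam by (intro mult_left_mono divide_right_mono) (auto simp: power2_eq_square)
    finally show ?thesis using rn by (simp add: abs_div field_simps)
  qed
  have "(p \<bullet> (A *v p) + 2 * (p \<bullet> w) + w \<bullet> (matrix_inv A *v w)) / rn - g2
      = (p \<bullet> (A *v p) / rn - g2) + 2 * (p \<bullet> w / rn) + w \<bullet> (matrix_inv A *v w) / rn"
    by (simp add: add_divide_distrib)
  then have "\<bar>(p \<bullet> (A *v p) + 2 * (p \<bullet> w) + w \<bullet> (matrix_inv A *v w)) / rn - g2\<bar>
      \<le> kk\<^sup>2 * e * (norm p)\<^sup>2 + 2 * (norm p * kk * e) + 2 * kk\<^sup>2 * e / lam"
    using quad cross inverse by linarith
  then show "\<bar>(p \<bullet> (A *v p) + 2 * (p \<bullet> w) + w \<bullet> (matrix_inv A *v w)) / real n - g2\<bar>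
      \<le> e * (kk\<^sup>2 * (norm p)\<^sup>2 + 2 * norm p * kk + 2 * kk\<^sup>2 / lam)"
    unfolding rn_def by (simp add: algebra_simps)
  have "(\<Sum>i<n. (zz i \<bullet> p + vv i)\<^sup>2) = p \<bullet> (A *v p) + 2 * (p \<bullet> w) + (\<Sum>i<n. (vv i)\<^sup>2)"
    unfolding A_def w_def inner_ZtZ_mult_vector inner_Zt
    by (simp add: power2_sum sum.distrib sum_distrib_left mult_ac)
  then have "(\<Sum>i<n. (zz i \<bullet> p + vv i)\<^sup>2) / rn - sx2
      = (p \<bullet> (A *v p) / rn - g2) + 2 * (p \<bullet> w / rn) + ((\<Sum>i<n. (vv i)\<^sup>2) / rn - sv2)"
    unfolding sx by (simp add: add_divide_distrib)
  then have "\<bar>(\<Sum>i<n. (zz i \<bullet> p + vv i)\<^sup>2) / rn - sx2\<bar> \<le> kk\<^sup>2 * e * (norm p)\<^sup>2 + 2 * (norm p * kk * e) + e"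
    using quad cross hV unfolding rn_def by linarith
  then show "\<bar>(\<Sum>i<n. (zz i \<bullet> p + vv i)\<^sup>2) / real n - sx2\<bar> \<le> e * (kk\<^sup>2 * (norm p)\<^sup>2 + 2 * norm p * kk + 1)"
    unfolding rn_def by (simp add: algebra_simps)
qed

lemma tau_hat_approx_bound:
  fixes zz :: "nat \<Rightarrow> real^'k" and vv ee :: "nat \<Rightarrow> real" and p :: "real^'k" and Q :: "real^'k^'k"
    and lam :: real
  defines "kk \<equiv> real CARD('k)"
  defines "cD \<equiv> kk\<^sup>2 * (norm p)\<^sup>2 + 2 * norm p * kk + 2 * kk\<^sup>2 / lam"
    and "cA \<equiv> kk\<^sup>2 * (norm p)\<^sup>2 + 2 * norm p * kk + 1"
  assumes n: "0 < n" and lam: "0 < lam" and coercive: "\<And>u. lam * (norm u)\<^sup>2 \<le> u \<bullet> (Q *v u)"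
    and g: "g2 = p \<bullet> (Q *v p)" "0 < g2" and sx: "sx2 = g2 + sv2" "0 \<le> sv2"
    and e: "0 < e" "e \<le> 1" "kk\<^sup>2 * e \<le> lam / 2" "e * cD \<le> g2 / 2" "e * cA \<le> 1"
    and hA: "\<And>j k. \<bar>ZtZ n zz $ j $ k / real n - Q $ j $ k\<bar> \<le> e"
    and hW: "\<And>j. \<bar>Zt n zz vv $ j / real n\<bar> \<le> e"
    and hV: "\<bar>(\<Sum>i<n. (vv i)\<^sup>2) / real n - sv2\<bar> \<le> e"
    and hS: "\<And>j. \<bar>Zt n zz ee $ j / sqrt (real n)\<bar> \<le> K" and K: "0 \<le> K"
  shows "\<bar>tau_hat n zz (\<lambda>i. zz i \<bullet> p + vv i) (\<lambda>i. \<beta> * (zz i \<bullet> p + vv i) + ee i)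
          - ((1 - sx2 / g2) * (p \<bullet> Zt n zz ee) / sqrt (real n) + (\<Sum>i<n. vv i * ee i) / sqrt (real n))\<bar>
       \<le> e * (norm p * kk * K * 2 * (sx2 * cD + g2 * cA) / g2\<^sup>2 + (sx2 + 1) * (2 * kk\<^sup>2 * K / lam) * 2 / g2)"
proof -
  define A where "A = ZtZ n zz"
  define w where "w = Zt n zz vv"
  define b where "b = Zt n zz ee"
  define rn where "rn = real n"
  define sn where "sn = sqrt (real n)"
  have rn: "0 < rn" and sn: "0 < sn" using n unfolding rn_def sn_def by auto
  have kk: "1 \<le> kk" unfolding kk_def by (simp add: Suc_le_eq)
  have "rn * (lam / 2) * (norm u)\<^sup>2 \<le> u \<bullet> (A *v u)" for u
    unfolding A_def rn_def using rn lam coercive hA e(3)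
    by (intro coercive_if_entrywise_close) (auto simp: kk_def rn_def)
  note coercive_A = invertible_if_coercive[of "rn * (lam / 2)", OF _ this]
  have inv: "invertible A" and inv_bound: "norm (matrix_inv A *v q) \<le> norm q / (rn * (lam / 2))" for q
    using coercive_A rn lam by auto
  have nw: "norm w \<le> kk * (rn * e)"
    unfolding kk_def w_def using hW rn by (intro norm_le_card_mult) (simp add: abs_div field_simps rn_def)
  have nb: "norm b \<le> kk * (sn * K)"
    unfolding kk_def b_def using hS sn by (intro norm_le_card_mult) (simp add: abs_div field_simps sn_def)
  define D where "D = (p \<bullet> (A *v p) + 2 * (p \<bullet> w) + w \<bullet> (matrix_inv A *v w)) / rn"
  define S where "S = (\<Sum>i<n. (zz i \<bullet> p + vv i)\<^sup>2) / rn"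
  define P where "P = p \<bullet> b / sn"
  define \<rho> where "\<rho> = w \<bullet> (matrix_inv A *v b) / sn"
  note gram = gram_terms_close[OF n lam inv_bound[unfolded rn_def A_def] g(1) sx(1) e(1,2)
      hA hW hV, folded A_def w_def kk_def rn_def, folded cD_def cA_def, folded D_def S_def]
  have hP: "\<bar>P\<bar> \<le> norm p * kk * K"
  proof -
    have "\<bar>p \<bullet> b\<bar> \<le> norm p * (kk * (sn * K))"
      using Cauchy_Schwarz_ineq2[of p b] nb by (meson mult_left_mono norm_ge_zero order_trans)
    then show ?thesis unfolding P_def using sn by (simp add: abs_div field_simps)
  qed
  have h\<rho>: "\<bar>\<rho>\<bar> \<le> 2 * kk\<^sup>2 * K * e / lam"
  proof -
    have "\<bar>w \<bullet> (matrix_inv A *v b)\<bar> \<le> norm w * (norm b / (rn * (lam / 2)))"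
      using Cauchy_Schwarz_ineq2[of w] inv_bound[of b] by (meson mult_left_mono norm_ge_zero order_trans)
    also have "\<dots> \<le> (kk * (rn * e)) * ((kk * (sn * K)) / (rn * (lam / 2)))"
      using nw nb rn lam kk e by (intro mult_mono divide_right_mono) auto
    also have "\<dots> = 2 * kk\<^sup>2 * K * e / lam * sn" using rn lam by (simp add: field_simps power2_eq_square)
    finally show ?thesis unfolding \<rho>_def using sn by (simp add: abs_div field_simps)
  qed
  have "D \<noteq> 0" using gram(1) e(4) g(2) by linarith
  then have "tau_hat n zz (\<lambda>i. zz i \<bullet> p + vv i) (\<lambda>i. \<beta> * (zz i \<bullet> p + vv i) + ee i)
      - ((1 - sx2 / g2) * (p \<bullet> Zt n zz ee) / sqrt (real n) + (\<Sum>i<n. vv i * ee i) / sqrt (real n))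
      = sx2 / g2 * P - S * (P + \<rho>) / D"
    using tau_hat_normalized[OF n inv[unfolded A_def]] unfolding A_def w_def b_def D_def S_def P_def \<rho>_def rn_def sn_def
    by (simp add: algebra_simps diff_divide_distrib)
  also have "\<bar>\<dots>\<bar> \<le> norm p * kk * K * 2 * (sx2 * (e * cD) + g2 * (e * cA)) / g2\<^sup>2
      + (sx2 + 1) * (2 * kk\<^sup>2 * K * e / lam) * 2 / g2"
    using sx g by (intro ratio_perturb_bound[OF g(2) _ hP h\<rho> gram(1) e(4) gram(2) e(5)]) auto
  finally show ?thesis by (simp add: algebra_simps)
qed

lemma tau_hat_approx_uniform:
  fixes p :: "real^'k" and Q :: "real^'k^'k" and \<beta> :: real
  assumes Q: "pos_def_mat Q" and g: "g2 = p \<bullet> (Q *v p)" "0 < g2" and sx: "sx2 = g2 + sv2" "0 \<le> sv2"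
    and d: "0 < d" and K: "0 \<le> K"
  shows "\<exists>e>0. \<forall>n zz vv ee. 0 < n
    \<longrightarrow> (\<forall>j k. \<bar>ZtZ n zz $ j $ k / real n - Q $ j $ k\<bar> \<le> e)
    \<longrightarrow> (\<forall>j. \<bar>Zt n zz vv $ j / real n\<bar> \<le> e)
    \<longrightarrow> \<bar>(\<Sum>i<n. (vv i)\<^sup>2) / real n - sv2\<bar> \<le> e
    \<longrightarrow> (\<forall>j. \<bar>Zt n zz ee $ j / sqrt (real n)\<bar> \<le> K)
    \<longrightarrow> \<bar>tau_hat n zz (\<lambda>i. zz i \<bullet> p + vv i) (\<lambda>i. \<beta> * (zz i \<bullet> p + vv i) + ee i)
          - ((1 - sx2 / g2) * (p \<bullet> Zt n zz ee) / sqrt (real n) + (\<Sum>i<n. vv i * ee i) / sqrt (real n))\<bar> \<le> d"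
proof -
  obtain lam where lam: "0 < lam" "\<And>u. lam * (norm u)\<^sup>2 \<le> u \<bullet> (Q *v u)"
    using pos_def_mat_coercive[OF Q] by blast
  define kk where "kk = real CARD('k)"
  define cD where "cD = kk\<^sup>2 * (norm p)\<^sup>2 + 2 * norm p * kk + 2 * kk\<^sup>2 / lam"
  define cA where "cA = kk\<^sup>2 * (norm p)\<^sup>2 + 2 * norm p * kk + 1"
  define C where "C = norm p * kk * K * 2 * (sx2 * cD + g2 * cA) / g2\<^sup>2 + (sx2 + 1) * (2 * kk\<^sup>2 * K / lam) * 2 / g2"
  have kk: "1 \<le> kk" unfolding kk_def by (simp add: Suc_le_eq)
  have nonneg: "0 \<le> cD" "0 \<le> cA" "0 \<le> C"
    using kk lam g sx K unfolding cD_def cA_def C_def by (auto intro!: add_nonneg_nonneg divide_nonneg_pos mult_nonneg_nonneg)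
  define S where "S = 1 + 2 * kk\<^sup>2 / lam + 2 * cD / g2 + cA + C / d"
  have terms: "0 \<le> 2 * kk\<^sup>2 / lam" "0 \<le> 2 * cD / g2" "0 \<le> C / d" using lam g(2) d nonneg by auto
  then have S: "0 < S" unfolding S_def using nonneg by linarith
  define e where "e = 1 / S"
  have small: "e * c \<le> 1" if "c \<le> S" for c using that S unfolding e_def by (simp add: field_simps)
  have le_S: "1 \<le> S" "2 * kk\<^sup>2 / lam \<le> S" "2 * cD / g2 \<le> S" "cA \<le> S" "C / d \<le> S"
    unfolding S_def using terms nonneg by linarith+
  have e: "0 < e" "e \<le> 1" "kk\<^sup>2 * e \<le> lam / 2" "e * cD \<le> g2 / 2" "e * cA \<le> 1" "e * C \<le> d"
    using S small[OF le_S(1)] small[OF le_S(2)] small[OF le_S(3)] small[OF le_S(4)] small[OF le_S(5)]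
      lam(1) g(2) d unfolding e_def by (simp_all add: field_simps)

  have "\<bar>tau_hat n zz (\<lambda>i. zz i \<bullet> p + vv i) (\<lambda>i. \<beta> * (zz i \<bullet> p + vv i) + ee i)
          - ((1 - sx2 / g2) * (p \<bullet> Zt n zz ee) / sqrt (real n) + (\<Sum>i<n. vv i * ee i) / sqrt (real n))\<bar> \<le> d"
    if "0 < n" "\<And>j k. \<bar>ZtZ n zz $ j $ k / real n - Q $ j $ k\<bar> \<le> e" "\<And>j. \<bar>Zt n zz vv $ j / real n\<bar> \<le> e"
      "\<bar>(\<Sum>i<n. (vv i)\<^sup>2) / real n - sv2\<bar> \<le> e" "\<And>j. \<bar>Zt n zz ee $ j / sqrt (real n)\<bar> \<le> K"
    for n zz vv ee
    using tau_hat_approx_bound[where \<beta>=\<beta>, OF that(1) lam g sx e(1-3)[unfolded kk_def] e(4-5)[unfolded cD_def cA_def kk_def]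
        that(2-4) that(5) K] e(6)
    unfolding C_def cD_def cA_def kk_def by linarith
  then show ?thesis using e(1) by blast
qed

section \<open>Measurability and componentwise integrals\<close>

lemma borel_measurable_vec_lambda:
  fixes g :: "'k::finite \<Rightarrow> 'a \<Rightarrow> 'b::euclidean_space"
  assumes "\<And>i. g i \<in> borel_measurable M"
  shows "(\<lambda>\<omega>. \<chi> i. g i \<omega>) \<in> borel_measurable M"
proof (subst borel_measurable_euclidean_space, intro ballI)
  fix b :: "'b^'k" assume "b \<in> Basis"
  then obtain i u where b: "b = axis i u" "u \<in> Basis" unfolding Basis_vec_def by auto
  have "(\<lambda>\<omega>. g i \<omega> \<bullet> u) \<in> borel_measurable M" using assms[of i] by measurable
  then show "(\<lambda>x. (\<chi> i. g i x) \<bullet> b) \<in> borel_measurable M" unfolding b by (simp add: inner_axis)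
qed

lemma borel_measurable_outer[measurable]:
  assumes [measurable]: "f \<in> borel_measurable N" "g \<in> borel_measurable N"
  shows "(\<lambda>\<omega>. outer (f \<omega>) (g \<omega>) :: real^'k^'k) \<in> borel_measurable N"
  unfolding outer_def
  by (intro borel_measurable_vec_lambda) (measurable, rule measurable_compose[OF _ borel_measurable_nth], simp)+

lemma borel_measurable_vec_nth[measurable (raw)]:
  fixes f :: "'a \<Rightarrow> 'b::euclidean_space^'k"
  assumes "f \<in> borel_measurable M"
  shows "(\<lambda>\<omega>. f \<omega> $ j) \<in> borel_measurable M"
proof (subst borel_measurable_euclidean_space, intro ballI)
  fix u :: 'b assume "u \<in> Basis"
  have "(\<lambda>\<omega>. f \<omega> \<bullet> axis j u) \<in> borel_measurable M" using assms by measurable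
  then show "(\<lambda>\<omega>. f \<omega> $ j \<bullet> u) \<in> borel_measurable M" by (simp add: inner_axis)
qed

lemma borel_measurable_det:
  fixes F :: "'k::finite \<Rightarrow> 'k \<Rightarrow> 'a \<Rightarrow> real"
  assumes "\<And>i j. F i j \<in> borel_measurable M"
  shows "(\<lambda>\<omega>. det ((\<chi> i j. F i j \<omega>) :: real^'k^'k)) \<in> borel_measurable M"
  unfolding det_def using assms by simp measurable

lemma projform_cramer:
  "projform n z a b = (if det (ZtZ n z) = 0 then 0 else
     (\<Sum>k\<in>UNIV. Zt n z a $ k * (det (\<chi> i j. if j = k then Zt n z b $ i else ZtZ n z $ i $ j) / det (ZtZ n z))))"
proof (cases "det (ZtZ n z) = 0")
  case True then show ?thesis unfolding projform_def by (simp add: invertible_det_nz)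
next
  case False
  then have inv: "invertible (ZtZ n z)" by (simp add: invertible_det_nz)
  have "ZtZ n z *v (matrix_inv (ZtZ n z) *v Zt n z b) = Zt n z b" by (rule matrix_inv_cancel(1)[OF inv])
  then have "matrix_inv (ZtZ n z) *v Zt n z b = (\<chi> k. det (\<chi> i j. if j = k then Zt n z b $ i else ZtZ n z $ i $ j) / det (ZtZ n z))"
    using cramer[OF False] by blast
  then show ?thesis unfolding projform_def using inv False by (simp add: inner_vec_def)
qed

lemma borel_measurable_projform:
  fixes z :: "nat \<Rightarrow> 'a \<Rightarrow> real^'k"
  assumes z: "\<And>i j. (\<lambda>\<omega>. z i \<omega> $ j) \<in> borel_measurable M"
    and a: "\<And>i. a i \<in> borel_measurable M" and b: "\<And>i. b i \<in> borel_measurable M"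
  shows "(\<lambda>\<omega>. projform n (\<lambda>i. z i \<omega>) (\<lambda>i. a i \<omega>) (\<lambda>i. b i \<omega>)) \<in> borel_measurable M"
proof -
  have [measurable]: "(\<lambda>\<omega>. z i \<omega> $ j) \<in> borel_measurable M" "a i \<in> borel_measurable M" "b i \<in> borel_measurable M" for i j
    using z a b by auto
  have d1: "(\<lambda>\<omega>. det (ZtZ n (\<lambda>i. z i \<omega>))) \<in> borel_measurable M"
  proof -
    have "(\<lambda>\<omega>. det ((\<chi> j k. \<Sum>i<n. z i \<omega> $ j * z i \<omega> $ k) :: real^'k^'k)) \<in> borel_measurable M"
      by (rule borel_measurable_det) measurable
    moreover have "ZtZ n (\<lambda>i. z i \<omega>) = (\<chi> j k. \<Sum>i<n. z i \<omega> $ j * z i \<omega> $ k)" for \<omega>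
      by (simp add: vec_eq_iff ZtZ_nth)
    ultimately show ?thesis by simp
  qed
  have d2: "(\<lambda>\<omega>. det (\<chi> i j. if j = k then Zt n (\<lambda>i. z i \<omega>) (\<lambda>i. b i \<omega>) $ i else ZtZ n (\<lambda>i. z i \<omega>) $ i $ j))
      \<in> borel_measurable M" for k
    unfolding Zt_nth ZtZ_nth by (rule borel_measurable_det) measurable
  have za: "(\<lambda>\<omega>. Zt n (\<lambda>i. z i \<omega>) (\<lambda>i. a i \<omega>) $ k) \<in> borel_measurable M" for k
    unfolding Zt_nth by measurable
  show ?thesis unfolding projform_cramer using d1 d2 za by measurable
qed

lemma borel_measurable_tau_hat:
  fixes z :: "nat \<Rightarrow> 'a \<Rightarrow> real^'k"
  assumes z: "\<And>i j. (\<lambda>\<omega>. z i \<omega> $ j) \<in> borel_measurable M"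
    and a: "\<And>i. x i \<in> borel_measurable M" and b: "\<And>i. y i \<in> borel_measurable M"
  shows "(\<lambda>\<omega>. tau_hat n (\<lambda>i. z i \<omega>) (\<lambda>i. x i \<omega>) (\<lambda>i. y i \<omega>)) \<in> borel_measurable M"
proof -
  have [measurable]: "x i \<in> borel_measurable M" "y i \<in> borel_measurable M" for i using a b by auto
  have [measurable]: "(\<lambda>\<omega>. projform n (\<lambda>i. z i \<omega>) (\<lambda>i. x i \<omega>) (\<lambda>i. y i \<omega>)) \<in> borel_measurable M"
    "(\<lambda>\<omega>. projform n (\<lambda>i. z i \<omega>) (\<lambda>i. x i \<omega>) (\<lambda>i. x i \<omega>)) \<in> borel_measurable M"
    by (rule borel_measurable_projform[OF z a]; rule a b)+
  show ?thesis unfolding tau_hat_def beta_tsls_def by measurable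
qed

lemma integrable_vec_if_nth:
  fixes f :: "'a \<Rightarrow> 'b::euclidean_space^'k"
  assumes "f \<in> borel_measurable M" "\<And>j. integrable M (\<lambda>\<omega>. f \<omega> $ j)"
  shows "integrable M f"
proof (rule Bochner_Integration.integrable_bound[where f="\<lambda>\<omega>. \<Sum>j\<in>UNIV. norm (f \<omega> $ j)"])
  show "integrable M (\<lambda>\<omega>. \<Sum>j\<in>UNIV. norm (f \<omega> $ j))" using assms(2) by auto
  show "f \<in> borel_measurable M" by fact
  show "AE \<omega> in M. norm (f \<omega>) \<le> norm (\<Sum>j\<in>UNIV. norm (f \<omega> $ j))"
  proof (intro AE_I2)
    fix \<omega>
    have "norm (f \<omega>) \<le> (\<Sum>j\<in>UNIV. norm (f \<omega> $ j))"
      unfolding norm_vec_def by (rule L2_set_le_sum) simp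
    then show "norm (f \<omega>) \<le> norm (\<Sum>j\<in>UNIV. norm (f \<omega> $ j))" by simp
  qed
qed

lemma integral_vec_nth:
  fixes f :: "'a \<Rightarrow> 'b::euclidean_space^'k"
  assumes "integrable M f"
  shows "(integral\<^sup>L M f) $ j = (\<integral>\<omega>. f \<omega> $ j \<partial>M)"
  using integral_bounded_linear[OF bounded_linear_vec_nth assms] by simp

lemma integrable_mat_if_nth:
  fixes f :: "'a \<Rightarrow> real^'k^'k"
  assumes "f \<in> borel_measurable M" "\<And>j k. integrable M (\<lambda>\<omega>. f \<omega> $ j $ k)"
  shows "integrable M f"
proof (rule integrable_vec_if_nth[OF assms(1)])
  fix j
  have "(\<lambda>\<omega>. f \<omega> $ j) \<in> borel_measurable M"
    by (rule borel_measurable_vec_nth[OF assms(1)])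
  then show "integrable M (\<lambda>\<omega>. f \<omega> $ j)" by (rule integrable_vec_if_nth) (rule assms(2))
qed

lemma integral_mat_nth:
  fixes f :: "'a \<Rightarrow> real^'k^'k"
  assumes "integrable M f"
  shows "(integral\<^sup>L M f) $ j $ k = (\<integral>\<omega>. f \<omega> $ j $ k \<partial>M)"
proof -
  have i: "integrable M (\<lambda>\<omega>. f \<omega> $ j)" by (rule integrable_bounded_linear[OF bounded_linear_vec_nth assms])
  show ?thesis using integral_vec_nth[OF assms, of j] integral_vec_nth[OF i, of k] by simp
qed

lemma integrable_scaleR_vec:
  fixes f :: "'a \<Rightarrow> real" and g :: "'a \<Rightarrow> real^'k"
  assumes [measurable]: "f \<in> borel_measurable M" "g \<in> borel_measurable M"
    and int: "\<And>j. integrable M (\<lambda>\<omega>. f \<omega> * g \<omega> $ j)"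
  shows "integrable M (\<lambda>\<omega>. f \<omega> *\<^sub>R g \<omega>)"
    and "(\<integral>\<omega>. f \<omega> *\<^sub>R g \<omega> \<partial>M) $ j = (\<integral>\<omega>. f \<omega> * g \<omega> $ j \<partial>M)"
proof -
  show *: "integrable M (\<lambda>\<omega>. f \<omega> *\<^sub>R g \<omega>)"
    by (rule integrable_vec_if_nth) (measurable, use int in simp)
  show "(\<integral>\<omega>. f \<omega> *\<^sub>R g \<omega> \<partial>M) $ j = (\<integral>\<omega>. f \<omega> * g \<omega> $ j \<partial>M)"
    using integral_vec_nth[OF *] by simp
qed

lemma integrable_if_nn_integral_le:
  fixes f :: "'a \<Rightarrow> real"
  assumes "f \<in> borel_measurable M" "\<And>\<omega>. 0 \<le> f \<omega>" "(\<integral>\<^sup>+\<omega>. ennreal (f \<omega>) \<partial>M) \<le> ennreal C"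
  shows "integrable M f" "(\<integral>\<omega>. f \<omega> \<partial>M) \<le> max 0 C"
proof -
  have le: "(\<integral>\<^sup>+\<omega>. ennreal (f \<omega>) \<partial>M) \<le> ennreal (max 0 C)" using assms(3) by (simp add: ennreal_max_0)
  then have fin: "(\<integral>\<^sup>+\<omega>. ennreal (f \<omega>) \<partial>M) < \<infinity>" using le_less_trans by fastforce
  show "integrable M f" by (rule integrableI_nonneg) (use assms fin in auto)
  have "(\<integral>\<omega>. f \<omega> \<partial>M) = enn2real (\<integral>\<^sup>+\<omega>. ennreal (f \<omega>) \<partial>M)"
    by (rule integral_eq_nn_integral) (use assms in auto)
  also have "\<dots> \<le> enn2real (ennreal (max 0 C))" by (rule enn2real_mono[OF le]) simp
  also have "\<dots> = max 0 C" by (rule enn2real_ennreal) simp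
  finally show "(\<integral>\<omega>. f \<omega> \<partial>M) \<le> max 0 C" .
qed

lemma max_powr_le_sum_powr:
  fixes a b c q :: real
  assumes "0 \<le> a" "0 \<le> b" "0 \<le> c" "0 < q"
  shows "(max 1 (max a (max b c))) powr q \<le> 1 + a powr q + b powr q + c powr q"
proof -
  have nn: "0 \<le> a powr q" "0 \<le> b powr q" "0 \<le> c powr q" by auto
  have "max 1 (max a (max b c)) \<in> {1, a, b, c}" by (auto simp: max_def)
  then show ?thesis using nn by auto
qed

lemma power4_le_powr: "1 \<le> (x::real) \<Longrightarrow> 4 \<le> q \<Longrightarrow> x ^ 4 \<le> x powr q"
  using powr_mono[of 4 q x] by (simp add: powr_realpow)

lemma abs_prod4_le_power4:
  fixes a b c d m :: real
  assumes "1 \<le> m" "\<bar>a\<bar> \<le> m" "\<bar>b\<bar> \<le> m" "\<bar>c\<bar> \<le> m" "\<bar>d\<bar> \<le> m"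
  shows "\<bar>a * b * c * d\<bar> \<le> m ^ 4"
proof -
  have "\<bar>a * b * c * d\<bar> = \<bar>a\<bar> * \<bar>b\<bar> * \<bar>c\<bar> * \<bar>d\<bar>" by (simp add: abs_mult)
  also have "\<dots> \<le> m * m * m * m" using assms by (intro mult_mono) auto
  finally show ?thesis by (simp add: power4_eq_xxxx)
qed
section \<open>The triangular array of the theorem\<close>

locale tsls_array =
  fixes M :: "nat \<Rightarrow> 'a measure"
    and z :: "nat \<Rightarrow> nat \<Rightarrow> 'a \<Rightarrow> real^'k"
    and v eps x y :: "nat \<Rightarrow> nat \<Rightarrow> 'a \<Rightarrow> real"
    and \<pi> :: "real^'k" and Q :: "real^'k^'k"
    and \<beta> \<tau> \<sigma>v2 \<sigma>e2 \<eta> C :: real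
  assumes prob: "\<And>n. prob_space (M n)"
    and meas_z: "\<And>n i. z n i \<in> borel_measurable (M n)"
    and meas_v: "\<And>n i. v n i \<in> borel_measurable (M n)"
    and meas_e: "\<And>n i. eps n i \<in> borel_measurable (M n)"
    and indep: "\<And>n. prob_space.indep_vars (M n) (\<lambda>_. borel)
                   (\<lambda>i \<omega>. (z n i \<omega>, v n i \<omega>, eps n i \<omega>)) {..<n}"
    and ident: "\<And>n i. i < n \<Longrightarrow>
                   distr (M n) borel (\<lambda>\<omega>. (z n i \<omega>, v n i \<omega>, eps n i \<omega>))
                 = distr (M n) borel (\<lambda>\<omega>. (z n 0 \<omega>, v n 0 \<omega>, eps n 0 \<omega>))"
    and ze: "\<And>n i. i < n \<Longrightarrow> (\<integral>\<omega>. eps n i \<omega> *\<^sub>R z n i \<omega> \<partial>M n) = 0"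
    and zv: "\<And>n i. i < n \<Longrightarrow> (\<integral>\<omega>. v n i \<omega> *\<^sub>R z n i \<omega> \<partial>M n) = 0"
    and ev: "\<And>n i. i < n \<Longrightarrow> (\<integral>\<omega>. eps n i \<omega> * v n i \<omega> \<partial>M n) = \<tau> / sqrt (real n)"
    and \<eta>: "0 < \<eta>"
    and moments: "\<forall>n i. i < n \<longrightarrow>
        (\<integral>\<^sup>+\<omega>. ennreal (norm (z n i \<omega>) powr (4 + \<eta>)) \<partial>M n) \<le> ennreal C \<and>
        (\<integral>\<^sup>+\<omega>. ennreal (\<bar>eps n i \<omega>\<bar> powr (4 + \<eta>)) \<partial>M n) \<le> ennreal C \<and>
        (\<integral>\<^sup>+\<omega>. ennreal (\<bar>v n i \<omega>\<bar> powr (4 + \<eta>)) \<partial>M n) \<le> ennreal C"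
    and lim_Q: "(\<lambda>n. \<integral>\<omega>. outer (z n 0 \<omega>) (z n 0 \<omega>) \<partial>M n) \<longlonglongrightarrow> Q"
    and Q_pos: "pos_def_mat Q"
    and lim_v: "(\<lambda>n. \<integral>\<omega>. (v n 0 \<omega>)\<^sup>2 \<partial>M n) \<longlonglongrightarrow> \<sigma>v2" and \<sigma>v2_pos: "\<sigma>v2 > 0"
    and lim_e: "(\<lambda>n. \<integral>\<omega>. (eps n 0 \<omega>)\<^sup>2 \<partial>M n) \<longlonglongrightarrow> \<sigma>e2" and \<sigma>e2_pos: "\<sigma>e2 > 0"
    and e1: "(\<lambda>n. (\<integral>\<omega>. (eps n 0 \<omega>)\<^sup>2 *\<^sub>R outer (z n 0 \<omega>) (z n 0 \<omega>) \<partial>M n)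
               - (\<integral>\<omega>. (eps n 0 \<omega>)\<^sup>2 \<partial>M n) *\<^sub>R (\<integral>\<omega>. outer (z n 0 \<omega>) (z n 0 \<omega>) \<partial>M n))
             \<longlonglongrightarrow> 0"
    and e2: "(\<lambda>n. (\<integral>\<omega>. ((eps n 0 \<omega>)\<^sup>2 * v n 0 \<omega>) *\<^sub>R z n 0 \<omega> \<partial>M n)
               - (\<integral>\<omega>. (eps n 0 \<omega>)\<^sup>2 \<partial>M n) *\<^sub>R (\<integral>\<omega>. v n 0 \<omega> *\<^sub>R z n 0 \<omega> \<partial>M n))
             \<longlonglongrightarrow> 0"
    and e3: "(\<lambda>n. (\<integral>\<omega>. (eps n 0 \<omega>)\<^sup>2 * (v n 0 \<omega>)\<^sup>2 \<partial>M n)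
               - (\<integral>\<omega>. (eps n 0 \<omega>)\<^sup>2 \<partial>M n) * (\<integral>\<omega>. (v n 0 \<omega>)\<^sup>2 \<partial>M n))
             \<longlonglongrightarrow> 0"
    and x_def: "\<And>n i \<omega>. x n i \<omega> = z n i \<omega> \<bullet> \<pi> + v n i \<omega>"
    and \<pi>_nz: "\<pi> \<noteq> 0"
    and y_def: "\<And>n i \<omega>. y n i \<omega> = \<beta> * x n i \<omega> + eps n i \<omega>"
begin

text \<open>Every product of four entries of a row is dominated by \<open>envelope n \<omega> ^ 4\<close>, hence by
  \<open>majorant n \<omega>\<close>, whose expectation is bounded uniformly in \<open>n\<close> by the moment condition.\<close>

definition "envelope n \<omega> = max 1 (max (norm (z n 0 \<omega>)) (max \<bar>eps n 0 \<omega>\<bar> \<bar>v n 0 \<omega>\<bar>))"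
definition "majorant n \<omega> =
  1 + norm (z n 0 \<omega>) powr (4 + \<eta>) + \<bar>eps n 0 \<omega>\<bar> powr (4 + \<eta>) + \<bar>v n 0 \<omega>\<bar> powr (4 + \<eta>)"
definition "majorant_bound = 1 + 3 * max 0 C"

lemma borel_measurable_row[measurable]:
  "z n i \<in> borel_measurable (M n)" "v n i \<in> borel_measurable (M n)" "eps n i \<in> borel_measurable (M n)"
  using meas_z meas_v meas_e by auto

lemma borel_measurable_z_nth[measurable]: "(\<lambda>\<omega>. z n i \<omega> $ j) \<in> borel_measurable (M n)"
  by (rule measurable_compose[OF meas_z borel_measurable_nth])

lemma borel_measurable_majorant[measurable]: "majorant n \<in> borel_measurable (M n)"
  unfolding majorant_def by measurable

lemma integrable_majorant:
  assumes "0 < n"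
  shows "integrable (M n) (majorant n)" "(\<integral>\<omega>. majorant n \<omega> \<partial>M n) \<le> majorant_bound"
proof -
  interpret prob_space "M n" by (rule prob)
  have "(\<integral>\<^sup>+\<omega>. ennreal (norm (z n 0 \<omega>) powr (4 + \<eta>)) \<partial>M n) \<le> ennreal C"
    "(\<integral>\<^sup>+\<omega>. ennreal (\<bar>eps n 0 \<omega>\<bar> powr (4 + \<eta>)) \<partial>M n) \<le> ennreal C"
    "(\<integral>\<^sup>+\<omega>. ennreal (\<bar>v n 0 \<omega>\<bar> powr (4 + \<eta>)) \<partial>M n) \<le> ennreal C"
    using moments assms by auto
  note bounded = this(1)[THEN integrable_if_nn_integral_le(1)[rotated 2]]
    this(1)[THEN integrable_if_nn_integral_le(2)[rotated 2]]
    this(2)[THEN integrable_if_nn_integral_le(1)[rotated 2]]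
    this(2)[THEN integrable_if_nn_integral_le(2)[rotated 2]]
    this(3)[THEN integrable_if_nn_integral_le(1)[rotated 2]]
    this(3)[THEN integrable_if_nn_integral_le(2)[rotated 2]]
  show "integrable (M n) (majorant n)" unfolding majorant_def using bounded by auto
  show "(\<integral>\<omega>. majorant n \<omega> \<partial>M n) \<le> majorant_bound"
    unfolding majorant_def majorant_bound_def using bounded by (simp add: prob_space)
qed

lemma envelope_bounds:
  "1 \<le> envelope n \<omega>" "norm (z n 0 \<omega>) \<le> envelope n \<omega>" "\<bar>eps n 0 \<omega>\<bar> \<le> envelope n \<omega>"
  "\<bar>v n 0 \<omega>\<bar> \<le> envelope n \<omega>" "\<bar>z n 0 \<omega> $ j\<bar> \<le> envelope n \<omega>"
  "envelope n \<omega> powr (4 + \<eta>) \<le> majorant n \<omega>" "(envelope n \<omega>)^4 \<le> majorant n \<omega>"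
proof -
  show "1 \<le> envelope n \<omega>" "norm (z n 0 \<omega>) \<le> envelope n \<omega>" "\<bar>eps n 0 \<omega>\<bar> \<le> envelope n \<omega>"
    "\<bar>v n 0 \<omega>\<bar> \<le> envelope n \<omega>"
    unfolding envelope_def by (simp_all add: le_max_iff_disj)
  then show "\<bar>z n 0 \<omega> $ j\<bar> \<le> envelope n \<omega>" using component_le_norm_cart order_trans by blast
  show *: "envelope n \<omega> powr (4 + \<eta>) \<le> majorant n \<omega>"
    unfolding envelope_def majorant_def by (rule max_powr_le_sum_powr) (use \<eta> in auto)
  show "(envelope n \<omega>)^4 \<le> majorant n \<omega>"
    using power4_le_powr[OF \<open>1 \<le> envelope n \<omega>\<close>, of "4 + \<eta>"] * \<eta> by linarith
qed

lemma integrable_le_majorant: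
  fixes f :: "'a \<Rightarrow> real"
  assumes n: "0 < n" and f: "f \<in> borel_measurable (M n)" and K: "0 \<le> K"
    and le: "\<And>\<omega>. \<bar>f \<omega>\<bar> \<le> K * majorant n \<omega>"
  shows "integrable (M n) f" "\<bar>\<integral>\<omega>. f \<omega> \<partial>M n\<bar> \<le> K * majorant_bound"
proof -
  have majorant_nonneg: "0 \<le> majorant n \<omega>" for \<omega> unfolding majorant_def by simp
  show int: "integrable (M n) f"
    by (rule Bochner_Integration.integrable_bound[where f="\<lambda>\<omega>. K * majorant n \<omega>"])
      (use integrable_majorant[OF n] f le K majorant_nonneg in \<open>auto simp: abs_mult\<close>)
  have "\<bar>\<integral>\<omega>. f \<omega> \<partial>M n\<bar> \<le> (\<integral>\<omega>. \<bar>f \<omega>\<bar> \<partial>M n)" by (rule integral_abs_bound)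
  also have "\<dots> \<le> (\<integral>\<omega>. K * majorant n \<omega> \<partial>M n)"
    by (rule integral_mono) (use int integrable_majorant[OF n] le in auto)
  also have "\<dots> \<le> K * majorant_bound" using integrable_majorant[OF n] K by (simp add: mult_left_mono)
  finally show "\<bar>\<integral>\<omega>. f \<omega> \<partial>M n\<bar> \<le> K * majorant_bound" .
qed

lemma integrable_prod4_envelope:
  assumes n: "0 < n" and f: "f \<in> borel_measurable (M n)"
    and eq: "\<And>\<omega>. f \<omega> = a \<omega> * b \<omega> * c \<omega> * d \<omega>"
    and "\<And>\<omega>. \<bar>a \<omega>\<bar> \<le> envelope n \<omega>" "\<And>\<omega>. \<bar>b \<omega>\<bar> \<le> envelope n \<omega>"
    and "\<And>\<omega>. \<bar>c \<omega>\<bar> \<le> envelope n \<omega>" "\<And>\<omega>. \<bar>d \<omega>\<bar> \<le> envelope n \<omega>"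
  shows "integrable (M n) f"
proof (rule integrable_le_majorant(1)[OF n f, of 1])
  fix \<omega>
  have "\<bar>f \<omega>\<bar> \<le> (envelope n \<omega>)^4"
    unfolding eq by (rule abs_prod4_le_power4) (use assms envelope_bounds(1) in auto)
  then show "\<bar>f \<omega>\<bar> \<le> 1 * majorant n \<omega>" using envelope_bounds(7)[of n \<omega>] by simp
qed simp

lemma abs_one_le_envelope: "\<bar>1\<bar> \<le> envelope n \<omega>" using envelope_bounds(1) by simp

lemmas envelope_factor_bounds = envelope_bounds(3,4,5) abs_one_le_envelope

lemma outer_moment_nth:
  assumes n: "0 < n"
  shows "integrable (M n) (\<lambda>\<omega>. z n 0 \<omega> $ j * z n 0 \<omega> $ k)"
    and "(\<integral>\<omega>. outer (z n 0 \<omega>) (z n 0 \<omega>) \<partial>M n) $ j $ k = (\<integral>\<omega>. z n 0 \<omega> $ j * z n 0 \<omega> $ k \<partial>M n)"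
proof -
  have int: "integrable (M n) (\<lambda>\<omega>. z n 0 \<omega> $ j * z n 0 \<omega> $ k)" for j k
  proof (rule integrable_prod4_envelope[OF n _ _ envelope_factor_bounds(3)[where j=j]
        envelope_factor_bounds(3)[where j=k] envelope_factor_bounds(4,4)])
    show "(\<lambda>\<omega>. z n 0 \<omega> $ j * z n 0 \<omega> $ k) \<in> borel_measurable (M n)" by measurable
  qed simp
  then show "integrable (M n) (\<lambda>\<omega>. z n 0 \<omega> $ j * z n 0 \<omega> $ k)" .
  have "integrable (M n) (\<lambda>\<omega>. outer (z n 0 \<omega>) (z n 0 \<omega>))"
    by (rule integrable_mat_if_nth) (measurable, use int in \<open>simp add: outer_def\<close>)
  then show "(\<integral>\<omega>. outer (z n 0 \<omega>) (z n 0 \<omega>) \<partial>M n) $ j $ k = (\<integral>\<omega>. z n 0 \<omega> $ j * z n 0 \<omega> $ k \<partial>M n)"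
    by (simp add: integral_mat_nth outer_def)
qed

lemma moment_e2zz_nth:
  assumes n: "0 < n"
  shows "integrable (M n) (\<lambda>\<omega>. (eps n 0 \<omega>)\<^sup>2 * (z n 0 \<omega> $ j * z n 0 \<omega> $ k))"
    and "(\<integral>\<omega>. (eps n 0 \<omega>)\<^sup>2 *\<^sub>R outer (z n 0 \<omega>) (z n 0 \<omega>) \<partial>M n) $ j $ k
      = (\<integral>\<omega>. (eps n 0 \<omega>)\<^sup>2 * (z n 0 \<omega> $ j * z n 0 \<omega> $ k) \<partial>M n)"
proof -
  have int: "integrable (M n) (\<lambda>\<omega>. (eps n 0 \<omega>)\<^sup>2 * (z n 0 \<omega> $ j * z n 0 \<omega> $ k))" for j k
    by (rule integrable_prod4_envelope[OF n _ _ envelope_factor_bounds(1,1) envelope_factor_bounds(3)[where j=j] envelope_factor_bounds(3)[where j=k]])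
      (measurable, simp add: power2_eq_square)
  then show "integrable (M n) (\<lambda>\<omega>. (eps n 0 \<omega>)\<^sup>2 * (z n 0 \<omega> $ j * z n 0 \<omega> $ k))" .
  have "integrable (M n) (\<lambda>\<omega>. (eps n 0 \<omega>)\<^sup>2 *\<^sub>R outer (z n 0 \<omega>) (z n 0 \<omega>))"
    by (rule integrable_mat_if_nth) (measurable, use int in \<open>simp add: outer_def\<close>)
  then show "(\<integral>\<omega>. (eps n 0 \<omega>)\<^sup>2 *\<^sub>R outer (z n 0 \<omega>) (z n 0 \<omega>) \<partial>M n) $ j $ k
      = (\<integral>\<omega>. (eps n 0 \<omega>)\<^sup>2 * (z n 0 \<omega> $ j * z n 0 \<omega> $ k) \<partial>M n)"
    by (simp add: integral_mat_nth outer_def)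
qed

lemma moment_scaleR_z_nth:
  assumes n: "0 < n" and f[measurable]: "f \<in> borel_measurable (M n)"
    and f_eq: "\<And>\<omega>. f \<omega> = a \<omega> * b \<omega> * c \<omega>"
    and "\<And>\<omega>. \<bar>a \<omega>\<bar> \<le> envelope n \<omega>" "\<And>\<omega>. \<bar>b \<omega>\<bar> \<le> envelope n \<omega>" "\<And>\<omega>. \<bar>c \<omega>\<bar> \<le> envelope n \<omega>"
  shows "integrable (M n) (\<lambda>\<omega>. f \<omega> * z n 0 \<omega> $ j)"
    and "(\<integral>\<omega>. f \<omega> *\<^sub>R z n 0 \<omega> \<partial>M n) $ j = (\<integral>\<omega>. f \<omega> * z n 0 \<omega> $ j \<partial>M n)"
proof -
  have int: "integrable (M n) (\<lambda>\<omega>. f \<omega> * z n 0 \<omega> $ j)" for j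
    by (rule integrable_prod4_envelope[OF n _ _ assms(4-6) envelope_factor_bounds(3)[where j=j]])
      (measurable, simp add: f_eq)
  then show "integrable (M n) (\<lambda>\<omega>. f \<omega> * z n 0 \<omega> $ j)" .
  show "(\<integral>\<omega>. f \<omega> *\<^sub>R z n 0 \<omega> \<partial>M n) $ j = (\<integral>\<omega>. f \<omega> * z n 0 \<omega> $ j \<partial>M n)"
    by (rule integrable_scaleR_vec(2)) (use int in simp_all)
qed

lemma
  assumes n: "0 < n"
  shows integral_ez_nth: "integrable (M n) (\<lambda>\<omega>. eps n 0 \<omega> * z n 0 \<omega> $ j)"
      "(\<integral>\<omega>. eps n 0 \<omega> * z n 0 \<omega> $ j \<partial>M n) = 0"
    and integral_vz_nth: "integrable (M n) (\<lambda>\<omega>. v n 0 \<omega> * z n 0 \<omega> $ j)"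
      "(\<integral>\<omega>. v n 0 \<omega> * z n 0 \<omega> $ j \<partial>M n) = 0"
    and moment_e2vz_nth: "integrable (M n) (\<lambda>\<omega>. ((eps n 0 \<omega>)\<^sup>2 * v n 0 \<omega>) * z n 0 \<omega> $ j)"
      "(\<integral>\<omega>. ((eps n 0 \<omega>)\<^sup>2 * v n 0 \<omega>) *\<^sub>R z n 0 \<omega> \<partial>M n) $ j
         = (\<integral>\<omega>. ((eps n 0 \<omega>)\<^sup>2 * v n 0 \<omega>) * z n 0 \<omega> $ j \<partial>M n)"
proof -
  note ez = moment_scaleR_z_nth[OF n _ _ envelope_factor_bounds(1) abs_one_le_envelope abs_one_le_envelope,
      of "eps n 0" j, simplified]
  note vz = moment_scaleR_z_nth[OF n _ _ envelope_factor_bounds(2) abs_one_le_envelope abs_one_le_envelope,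
      of "v n 0" j, simplified]
  note evz = moment_scaleR_z_nth[OF n _ _ envelope_factor_bounds(1,1,2),
      of "\<lambda>\<omega>. (eps n 0 \<omega>)\<^sup>2 * v n 0 \<omega>" j, simplified power2_eq_square]
  show "integrable (M n) (\<lambda>\<omega>. eps n 0 \<omega> * z n 0 \<omega> $ j)" "(\<integral>\<omega>. eps n 0 \<omega> * z n 0 \<omega> $ j \<partial>M n) = 0"
    using ez ze[of 0 n] n by auto
  show "integrable (M n) (\<lambda>\<omega>. v n 0 \<omega> * z n 0 \<omega> $ j)" "(\<integral>\<omega>. v n 0 \<omega> * z n 0 \<omega> $ j \<partial>M n) = 0"
    using vz zv[of 0 n] n by auto
  show "integrable (M n) (\<lambda>\<omega>. ((eps n 0 \<omega>)\<^sup>2 * v n 0 \<omega>) * z n 0 \<omega> $ j)"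
    "(\<integral>\<omega>. ((eps n 0 \<omega>)\<^sup>2 * v n 0 \<omega>) *\<^sub>R z n 0 \<omega> \<partial>M n) $ j
       = (\<integral>\<omega>. ((eps n 0 \<omega>)\<^sup>2 * v n 0 \<omega>) * z n 0 \<omega> $ j \<partial>M n)"
    using evz by (simp_all add: power2_eq_square)
qed

lemma integrable_scalar_moments:
  assumes n: "0 < n"
  shows "integrable (M n) (\<lambda>\<omega>. (eps n 0 \<omega>)\<^sup>2)" "integrable (M n) (\<lambda>\<omega>. (v n 0 \<omega>)\<^sup>2)"
    "integrable (M n) (\<lambda>\<omega>. eps n 0 \<omega> * v n 0 \<omega>)" "integrable (M n) (\<lambda>\<omega>. (eps n 0 \<omega>)\<^sup>2 * (v n 0 \<omega>)\<^sup>2)"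
  by (rule integrable_prod4_envelope[OF n _ _ envelope_factor_bounds(1,1,4,4)]
      integrable_prod4_envelope[OF n _ _ envelope_factor_bounds(2,2,4,4)]
      integrable_prod4_envelope[OF n _ _ envelope_factor_bounds(1,2,4,4)]
      integrable_prod4_envelope[OF n _ _ envelope_factor_bounds(1,1,2,2)];
      measurable?; simp add: power2_eq_square)+

lemma lim_zz: "(\<lambda>n. \<integral>\<omega>. z n 0 \<omega> $ j * z n 0 \<omega> $ k \<partial>M n) \<longlonglongrightarrow> Q $ j $ k"
proof -
  have "(\<lambda>n. (\<integral>\<omega>. outer (z n 0 \<omega>) (z n 0 \<omega>) \<partial>M n) $ j $ k) \<longlonglongrightarrow> Q $ j $ k"
    by (intro tendsto_vec_nth lim_Q)
  moreover have "eventually (\<lambda>n. (\<integral>\<omega>. outer (z n 0 \<omega>) (z n 0 \<omega>) \<partial>M n) $ j $ k = (\<integral>\<omega>. z n 0 \<omega> $ j * z n 0 \<omega> $ k \<partial>M n)) sequentially"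
    using eventually_gt_at_top[of 0] by eventually_elim (rule outer_moment_nth(2))
  ultimately show ?thesis using tendsto_cong by force
qed

lemma lim_e2zz: "(\<lambda>n. \<integral>\<omega>. (eps n 0 \<omega>)\<^sup>2 * (z n 0 \<omega> $ j * z n 0 \<omega> $ k) \<partial>M n) \<longlonglongrightarrow> \<sigma>e2 * Q $ j $ k"
proof -
  have a: "(\<lambda>n. ((\<integral>\<omega>. (eps n 0 \<omega>)\<^sup>2 *\<^sub>R outer (z n 0 \<omega>) (z n 0 \<omega>) \<partial>M n)
               - (\<integral>\<omega>. (eps n 0 \<omega>)\<^sup>2 \<partial>M n) *\<^sub>R (\<integral>\<omega>. outer (z n 0 \<omega>) (z n 0 \<omega>) \<partial>M n)) $ j $ k) \<longlonglongrightarrow> 0"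
    using tendsto_vec_nth[OF tendsto_vec_nth[OF e1]] by simp
  have b: "(\<lambda>n. (\<integral>\<omega>. (eps n 0 \<omega>)\<^sup>2 \<partial>M n) * (\<integral>\<omega>. outer (z n 0 \<omega>) (z n 0 \<omega>) \<partial>M n) $ j $ k) \<longlonglongrightarrow> \<sigma>e2 * Q $ j $ k"
    by (intro tendsto_mult lim_e tendsto_vec_nth lim_Q)
  have "(\<lambda>n. ((\<integral>\<omega>. (eps n 0 \<omega>)\<^sup>2 *\<^sub>R outer (z n 0 \<omega>) (z n 0 \<omega>) \<partial>M n)
               - (\<integral>\<omega>. (eps n 0 \<omega>)\<^sup>2 \<partial>M n) *\<^sub>R (\<integral>\<omega>. outer (z n 0 \<omega>) (z n 0 \<omega>) \<partial>M n)) $ j $ k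
       + (\<integral>\<omega>. (eps n 0 \<omega>)\<^sup>2 \<partial>M n) * (\<integral>\<omega>. outer (z n 0 \<omega>) (z n 0 \<omega>) \<partial>M n) $ j $ k) \<longlonglongrightarrow> 0 + \<sigma>e2 * Q $ j $ k"
    by (rule tendsto_add[OF a b])
  moreover have "eventually (\<lambda>n. ((\<integral>\<omega>. (eps n 0 \<omega>)\<^sup>2 *\<^sub>R outer (z n 0 \<omega>) (z n 0 \<omega>) \<partial>M n)
               - (\<integral>\<omega>. (eps n 0 \<omega>)\<^sup>2 \<partial>M n) *\<^sub>R (\<integral>\<omega>. outer (z n 0 \<omega>) (z n 0 \<omega>) \<partial>M n)) $ j $ k
       + (\<integral>\<omega>. (eps n 0 \<omega>)\<^sup>2 \<partial>M n) * (\<integral>\<omega>. outer (z n 0 \<omega>) (z n 0 \<omega>) \<partial>M n) $ j $ k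
      = (\<integral>\<omega>. (eps n 0 \<omega>)\<^sup>2 * (z n 0 \<omega> $ j * z n 0 \<omega> $ k) \<partial>M n)) sequentially"
    using eventually_gt_at_top[of 0] by eventually_elim (simp add: moment_e2zz_nth)
  ultimately show ?thesis using tendsto_cong by force
qed

lemma lim_e2vz: "(\<lambda>n. \<integral>\<omega>. ((eps n 0 \<omega>)\<^sup>2 * v n 0 \<omega>) * z n 0 \<omega> $ j \<partial>M n) \<longlonglongrightarrow> 0"
proof -
  have a: "(\<lambda>n. ((\<integral>\<omega>. ((eps n 0 \<omega>)\<^sup>2 * v n 0 \<omega>) *\<^sub>R z n 0 \<omega> \<partial>M n)
               - (\<integral>\<omega>. (eps n 0 \<omega>)\<^sup>2 \<partial>M n) *\<^sub>R (\<integral>\<omega>. v n 0 \<omega> *\<^sub>R z n 0 \<omega> \<partial>M n)) $ j) \<longlonglongrightarrow> 0"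
    using tendsto_vec_nth[OF e2] by simp
  moreover have "eventually (\<lambda>n. ((\<integral>\<omega>. ((eps n 0 \<omega>)\<^sup>2 * v n 0 \<omega>) *\<^sub>R z n 0 \<omega> \<partial>M n)
               - (\<integral>\<omega>. (eps n 0 \<omega>)\<^sup>2 \<partial>M n) *\<^sub>R (\<integral>\<omega>. v n 0 \<omega> *\<^sub>R z n 0 \<omega> \<partial>M n)) $ j
      = (\<integral>\<omega>. ((eps n 0 \<omega>)\<^sup>2 * v n 0 \<omega>) * z n 0 \<omega> $ j \<partial>M n)) sequentially"
    using eventually_gt_at_top[of 0] by eventually_elim (simp add: moment_e2vz_nth zv)
  ultimately show ?thesis using tendsto_cong by force
qed

lemma lim_e2v2: "(\<lambda>n. \<integral>\<omega>. (eps n 0 \<omega>)\<^sup>2 * (v n 0 \<omega>)\<^sup>2 \<partial>M n) \<longlonglongrightarrow> \<sigma>e2 * \<sigma>v2"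
  using tendsto_add[OF e3 tendsto_mult[OF lim_e lim_v]] by simp

text \<open>The summands are the centred \<open>Y\<^sub>i\<close> of the proof sketch, and \<open>\<alpha> = -\<sigma>v2/\<gamma>2\<close>. Since
  \<open>\<bar>summand\<bar> \<le> c \<cdot> envelope\<^sup>2\<close>, the choice \<open>\<delta> \<le> \<eta>/2\<close> puts the Lyapunov moment of order
  \<open>2 + \<delta>\<close> under the majorant.\<close>

definition "\<gamma>2 = \<pi> \<bullet> (Q *v \<pi>)"
definition "\<sigma>x2 = \<gamma>2 + \<sigma>v2"
definition "\<alpha> = 1 - \<sigma>x2 / \<gamma>2"
definition "V = \<sigma>e2 * \<sigma>x2 * (\<sigma>v2 / \<gamma>2)"
definition "influence (t :: (real^'k) \<times> real \<times> real) = \<alpha> * (fst t \<bullet> \<pi>) * snd (snd t) + fst (snd t) * snd (snd t)"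
definition "mean_shift n = \<tau> / sqrt (real n)"
definition "summand n i \<omega> = influence (z n i \<omega>, v n i \<omega>, eps n i \<omega>) - mean_shift n"
definition "\<delta> = min 1 (\<eta> / 2)"
definition "summand_const = \<bar>\<alpha>\<bar> * norm \<pi> + 1 + \<bar>\<tau>\<bar>"

lemma \<gamma>2_pos: "0 < \<gamma>2" using Q_pos \<pi>_nz unfolding pos_def_mat_def \<gamma>2_def by auto

lemma V_pos: "0 < V" unfolding V_def \<sigma>x2_def using \<gamma>2_pos \<sigma>v2_pos \<sigma>e2_pos by auto

lemma V_eq: "V = \<alpha>\<^sup>2 * \<sigma>e2 * \<gamma>2 + \<sigma>e2 * \<sigma>v2"
  unfolding V_def \<alpha>_def \<sigma>x2_def using \<gamma>2_pos by (simp add: field_simps power2_eq_square)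

lemma borel_measurable_influence[measurable]: "influence \<in> borel_measurable borel"
  unfolding influence_def by (intro borel_measurable_continuous_onI continuous_intros)

lemma borel_measurable_summand[measurable]: "summand n i \<in> borel_measurable (M n)"
  unfolding summand_def by measurable

lemma influence_expand: "influence (z n 0 \<omega>, v n 0 \<omega>, eps n 0 \<omega>) =
   (\<Sum>j\<in>UNIV. (\<alpha> * \<pi> $ j) * (eps n 0 \<omega> * z n 0 \<omega> $ j)) + eps n 0 \<omega> * v n 0 \<omega>"
  unfolding influence_def by (simp add: inner_vec_def sum_distrib_left sum_distrib_right mult_ac)

lemma influence_square_expand: "(influence (z n 0 \<omega>, v n 0 \<omega>, eps n 0 \<omega>))\<^sup>2 =
   (\<Sum>j\<in>UNIV. \<Sum>k\<in>UNIV. (\<alpha>\<^sup>2 * \<pi> $ j * \<pi> $ k) * ((eps n 0 \<omega>)\<^sup>2 * (z n 0 \<omega> $ j * z n 0 \<omega> $ k)))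
   + (\<Sum>j\<in>UNIV. (2 * \<alpha> * \<pi> $ j) * (((eps n 0 \<omega>)\<^sup>2 * v n 0 \<omega>) * z n 0 \<omega> $ j))
   + (eps n 0 \<omega>)\<^sup>2 * (v n 0 \<omega>)\<^sup>2"
proof -
  define s where "s = (\<Sum>j\<in>UNIV. z n 0 \<omega> $ j * \<pi> $ j)"
  have "influence (z n 0 \<omega>, v n 0 \<omega>, eps n 0 \<omega>) = \<alpha> * s * eps n 0 \<omega> + v n 0 \<omega> * eps n 0 \<omega>"
    unfolding influence_def s_def by (simp add: inner_vec_def)
  moreover have "s * s = (\<Sum>j\<in>UNIV. \<Sum>k\<in>UNIV. (z n 0 \<omega> $ j * \<pi> $ j) * (z n 0 \<omega> $ k * \<pi> $ k))"
    unfolding s_def by (simp add: sum_product)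
  ultimately show ?thesis
    unfolding power2_eq_square
    by (simp add: algebra_simps sum_distrib_left sum_distrib_right sum.distrib s_def)
qed

lemma influence_mean: assumes n: "0 < n"
  shows "integrable (M n) (\<lambda>\<omega>. influence (z n 0 \<omega>, v n 0 \<omega>, eps n 0 \<omega>))"
    "(\<integral>\<omega>. influence (z n 0 \<omega>, v n 0 \<omega>, eps n 0 \<omega>) \<partial>M n) = mean_shift n"
proof -
  have I: "integrable (M n) (\<lambda>\<omega>. (\<Sum>j\<in>UNIV. (\<alpha> * \<pi> $ j) * (eps n 0 \<omega> * z n 0 \<omega> $ j)) + eps n 0 \<omega> * v n 0 \<omega>)"
    using integral_ez_nth[OF n] integrable_scalar_moments[OF n] by auto
  then show "integrable (M n) (\<lambda>\<omega>. influence (z n 0 \<omega>, v n 0 \<omega>, eps n 0 \<omega>))" unfolding influence_expand .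
  have "(\<integral>\<omega>. influence (z n 0 \<omega>, v n 0 \<omega>, eps n 0 \<omega>) \<partial>M n) =
     (\<integral>\<omega>. (\<Sum>j\<in>UNIV. (\<alpha> * \<pi> $ j) * (eps n 0 \<omega> * z n 0 \<omega> $ j)) + eps n 0 \<omega> * v n 0 \<omega> \<partial>M n)"
    unfolding influence_expand ..
  also have "\<dots> = (\<Sum>j\<in>UNIV. (\<alpha> * \<pi> $ j) * (\<integral>\<omega>. eps n 0 \<omega> * z n 0 \<omega> $ j \<partial>M n)) + (\<integral>\<omega>. eps n 0 \<omega> * v n 0 \<omega> \<partial>M n)"
    using integral_ez_nth[OF n] integrable_scalar_moments[OF n] by (simp add: Bochner_Integration.integral_sum)
  also have "\<dots> = mean_shift n" using integral_ez_nth[OF n] ev[of 0 n] n unfolding mean_shift_def by simp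
  finally show "(\<integral>\<omega>. influence (z n 0 \<omega>, v n 0 \<omega>, eps n 0 \<omega>) \<partial>M n) = mean_shift n" .
qed

lemma influence_second_moment: assumes n: "0 < n"
  shows "integrable (M n) (\<lambda>\<omega>. (influence (z n 0 \<omega>, v n 0 \<omega>, eps n 0 \<omega>))\<^sup>2)"
    "(\<integral>\<omega>. (influence (z n 0 \<omega>, v n 0 \<omega>, eps n 0 \<omega>))\<^sup>2 \<partial>M n) =
      (\<Sum>j\<in>UNIV. \<Sum>k\<in>UNIV. (\<alpha>\<^sup>2 * \<pi> $ j * \<pi> $ k) * (\<integral>\<omega>. (eps n 0 \<omega>)\<^sup>2 * (z n 0 \<omega> $ j * z n 0 \<omega> $ k) \<partial>M n))
   + (\<Sum>j\<in>UNIV. (2 * \<alpha> * \<pi> $ j) * (\<integral>\<omega>. ((eps n 0 \<omega>)\<^sup>2 * v n 0 \<omega>) * z n 0 \<omega> $ j \<partial>M n))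
   + (\<integral>\<omega>. (eps n 0 \<omega>)\<^sup>2 * (v n 0 \<omega>)\<^sup>2 \<partial>M n)"
  unfolding influence_square_expand using moment_e2zz_nth[OF n] moment_e2vz_nth[OF n] integrable_scalar_moments[OF n]
  by (simp_all add: Bochner_Integration.integral_sum Bochner_Integration.integral_add Bochner_Integration.integrable_sum)

lemma lim_influence_second_moment: "(\<lambda>n. \<integral>\<omega>. (influence (z n 0 \<omega>, v n 0 \<omega>, eps n 0 \<omega>))\<^sup>2 \<partial>M n) \<longlonglongrightarrow> V"
proof -
  have "(\<lambda>n. (\<Sum>j\<in>UNIV. \<Sum>k\<in>UNIV. (\<alpha>\<^sup>2 * \<pi> $ j * \<pi> $ k) * (\<integral>\<omega>. (eps n 0 \<omega>)\<^sup>2 * (z n 0 \<omega> $ j * z n 0 \<omega> $ k) \<partial>M n))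
   + (\<Sum>j\<in>UNIV. (2 * \<alpha> * \<pi> $ j) * (\<integral>\<omega>. ((eps n 0 \<omega>)\<^sup>2 * v n 0 \<omega>) * z n 0 \<omega> $ j \<partial>M n))
   + (\<integral>\<omega>. (eps n 0 \<omega>)\<^sup>2 * (v n 0 \<omega>)\<^sup>2 \<partial>M n))
    \<longlonglongrightarrow> (\<Sum>j\<in>UNIV. \<Sum>k\<in>UNIV. (\<alpha>\<^sup>2 * \<pi> $ j * \<pi> $ k) * (\<sigma>e2 * Q $ j $ k))
      + (\<Sum>j\<in>(UNIV::'k set). (2 * \<alpha> * \<pi> $ j) * 0) + \<sigma>e2 * \<sigma>v2"
    by (intro tendsto_add tendsto_sum tendsto_mult tendsto_const lim_e2zz lim_e2vz lim_e2v2)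
  moreover have "(\<Sum>j\<in>UNIV. \<Sum>k\<in>UNIV. (\<alpha>\<^sup>2 * \<pi> $ j * \<pi> $ k) * (\<sigma>e2 * Q $ j $ k))
      + (\<Sum>j\<in>(UNIV::'k set). (2 * \<alpha> * \<pi> $ j) * 0) + \<sigma>e2 * \<sigma>v2 = V"
  proof -
    have "\<gamma>2 = (\<Sum>j\<in>UNIV. \<Sum>k\<in>UNIV. \<pi> $ j * \<pi> $ k * Q $ j $ k)"
      unfolding \<gamma>2_def by (simp add: inner_vec_def matrix_vector_mult_def sum_distrib_left mult_ac)
    then show ?thesis unfolding V_eq by (simp add: sum_distrib_left mult_ac)
  qed
  moreover have "eventually (\<lambda>n. (\<integral>\<omega>. (influence (z n 0 \<omega>, v n 0 \<omega>, eps n 0 \<omega>))\<^sup>2 \<partial>M n) =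
      (\<Sum>j\<in>UNIV. \<Sum>k\<in>UNIV. (\<alpha>\<^sup>2 * \<pi> $ j * \<pi> $ k) * (\<integral>\<omega>. (eps n 0 \<omega>)\<^sup>2 * (z n 0 \<omega> $ j * z n 0 \<omega> $ k) \<partial>M n))
   + (\<Sum>j\<in>UNIV. (2 * \<alpha> * \<pi> $ j) * (\<integral>\<omega>. ((eps n 0 \<omega>)\<^sup>2 * v n 0 \<omega>) * z n 0 \<omega> $ j \<partial>M n))
   + (\<integral>\<omega>. (eps n 0 \<omega>)\<^sup>2 * (v n 0 \<omega>)\<^sup>2 \<partial>M n)) sequentially"
    using eventually_gt_at_top[of 0] by eventually_elim (rule influence_second_moment(2))
  ultimately show ?thesis using tendsto_cong by force
qed

lemma \<delta>_bounds: "0 < \<delta>" "\<delta> \<le> 1" "2 * (2 + \<delta>) \<le> 4 + \<eta>"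
  using \<eta> unfolding \<delta>_def by auto

lemma one_le_summand_const: "1 \<le> summand_const" unfolding summand_const_def by simp

lemma abs_summand_le: assumes n: "0 < n" shows "\<bar>summand n 0 \<omega>\<bar> \<le> summand_const * (envelope n \<omega>)\<^sup>2"
proof -
  note m = envelope_bounds[of n \<omega>]
  have m2: "1 \<le> (envelope n \<omega>)\<^sup>2" using m(1) by (simp add: one_le_power)
  have zp: "\<bar>z n 0 \<omega> \<bullet> \<pi>\<bar> \<le> norm \<pi> * envelope n \<omega>"
  proof -
    have "\<bar>z n 0 \<omega> \<bullet> \<pi>\<bar> \<le> norm (z n 0 \<omega>) * norm \<pi>" by (rule Cauchy_Schwarz_ineq2)
    also have "\<dots> \<le> envelope n \<omega> * norm \<pi>" by (rule mult_right_mono[OF m(2)]) simp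
    finally show ?thesis by (simp add: mult.commute)
  qed
  have t1: "\<bar>\<alpha> * (z n 0 \<omega> \<bullet> \<pi>) * eps n 0 \<omega>\<bar> \<le> \<bar>\<alpha>\<bar> * norm \<pi> * (envelope n \<omega>)\<^sup>2"
  proof -
    have "\<bar>\<alpha> * (z n 0 \<omega> \<bullet> \<pi>) * eps n 0 \<omega>\<bar> = \<bar>\<alpha>\<bar> * (\<bar>z n 0 \<omega> \<bullet> \<pi>\<bar> * \<bar>eps n 0 \<omega>\<bar>)" by (simp add: abs_mult)
    also have "\<dots> \<le> \<bar>\<alpha>\<bar> * ((norm \<pi> * envelope n \<omega>) * envelope n \<omega>)"
      using zp m(3) by (intro mult_left_mono mult_mono) auto
    finally show ?thesis by (simp add: power2_eq_square mult_ac)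
  qed
  have t2: "\<bar>v n 0 \<omega> * eps n 0 \<omega>\<bar> \<le> (envelope n \<omega>)\<^sup>2"
    using m(3,4) by (simp add: abs_mult power2_eq_square mult_mono)
  have t3: "\<bar>mean_shift n\<bar> \<le> \<bar>\<tau>\<bar>"
  proof -
    have "1 \<le> sqrt (real n)" using n by simp
    then show ?thesis unfolding mean_shift_def by (simp add: abs_div divide_le_eq_1 divide_le_eq mult_le_cancel_left1)
  qed
  have "\<bar>summand n 0 \<omega>\<bar> \<le> \<bar>\<alpha> * (z n 0 \<omega> \<bullet> \<pi>) * eps n 0 \<omega>\<bar> + \<bar>v n 0 \<omega> * eps n 0 \<omega>\<bar> + \<bar>mean_shift n\<bar>"
    unfolding summand_def influence_def by simp
  also have "\<dots> \<le> \<bar>\<alpha>\<bar> * norm \<pi> * (envelope n \<omega>)\<^sup>2 + (envelope n \<omega>)\<^sup>2 + \<bar>\<tau>\<bar> * (envelope n \<omega>)\<^sup>2"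
  proof -
    have "\<bar>\<tau>\<bar> * 1 \<le> \<bar>\<tau>\<bar> * (envelope n \<omega>)\<^sup>2" by (rule mult_left_mono[OF m2]) simp
    then have t3': "\<bar>mean_shift n\<bar> \<le> \<bar>\<tau>\<bar> * (envelope n \<omega>)\<^sup>2" using t3 by simp
    show ?thesis by (intro add_mono t1 t2 t3')
  qed
  also have "\<dots> = summand_const * (envelope n \<omega>)\<^sup>2" unfolding summand_const_def by (simp add: algebra_simps)
  finally show ?thesis .
qed

lemma summand_square_le: assumes n: "0 < n" shows "\<bar>(summand n 0 \<omega>)\<^sup>2\<bar> \<le> summand_const\<^sup>2 * majorant n \<omega>"
proof -
  have "\<bar>(summand n 0 \<omega>)\<^sup>2\<bar> = \<bar>summand n 0 \<omega>\<bar>\<^sup>2" by simp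
  also have "\<dots> \<le> (summand_const * (envelope n \<omega>)\<^sup>2)\<^sup>2" by (rule power_mono[OF abs_summand_le[OF n]]) simp
  also have "\<dots> = summand_const\<^sup>2 * (envelope n \<omega>)^4" by (simp add: power_mult_distrib flip: power_mult)
  also have "\<dots> \<le> summand_const\<^sup>2 * majorant n \<omega>" using envelope_bounds(7) by (intro mult_left_mono) auto
  finally show ?thesis .
qed

lemma summand_powr_le: assumes n: "0 < n" shows "\<bar>\<bar>summand n 0 \<omega>\<bar> powr (2 + \<delta>)\<bar> \<le> summand_const powr (2 + \<delta>) * majorant n \<omega>"
proof -
  have m1: "1 \<le> envelope n \<omega>" by (rule envelope_bounds(1))
  have sq: "(envelope n \<omega>)\<^sup>2 = envelope n \<omega> powr 2" using m1 by (simp add: powr_numeral)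
  have pp: "((envelope n \<omega>)\<^sup>2) powr (2 + \<delta>) = envelope n \<omega> powr (2 * (2 + \<delta>))"
    unfolding sq by (simp add: powr_powr)
  have "\<bar>\<bar>summand n 0 \<omega>\<bar> powr (2 + \<delta>)\<bar> = \<bar>summand n 0 \<omega>\<bar> powr (2 + \<delta>)" by simp
  also have "\<dots> \<le> (summand_const * (envelope n \<omega>)\<^sup>2) powr (2 + \<delta>)"
    by (rule powr_mono2) (use abs_summand_le[OF n] \<delta>_bounds in auto)
  also have "\<dots> = summand_const powr (2 + \<delta>) * ((envelope n \<omega>)\<^sup>2) powr (2 + \<delta>)"
    using one_le_summand_const by (simp add: powr_mult)
  also have "\<dots> = summand_const powr (2 + \<delta>) * envelope n \<omega> powr (2 * (2 + \<delta>))" unfolding pp ..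
  also have "\<dots> \<le> summand_const powr (2 + \<delta>) * majorant n \<omega>"
  proof (rule mult_left_mono)
    show "envelope n \<omega> powr (2 * (2 + \<delta>)) \<le> majorant n \<omega>"
      using powr_mono[OF \<delta>_bounds(3) m1] envelope_bounds(6)[of n \<omega>] by linarith
  qed simp
  finally show ?thesis .
qed

lemma lim_summand_second_moment: "(\<lambda>n. \<integral>\<omega>. (summand n 0 \<omega>)\<^sup>2 \<partial>M n) \<longlonglongrightarrow> V"
proof -
  have eq: "(\<integral>\<omega>. (summand n 0 \<omega>)\<^sup>2 \<partial>M n) = (\<integral>\<omega>. (influence (z n 0 \<omega>, v n 0 \<omega>, eps n 0 \<omega>))\<^sup>2 \<partial>M n) - (mean_shift n)\<^sup>2"
    if n: "0 < n" for n
  proof -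
    interpret prob_space "M n" by (rule prob)
    note moments = influence_mean[OF n] influence_second_moment(1)[OF n]
    have "(\<lambda>\<omega>. (summand n 0 \<omega>)\<^sup>2) = (\<lambda>\<omega>. (influence (z n 0 \<omega>, v n 0 \<omega>, eps n 0 \<omega>))\<^sup>2 - 2 * mean_shift n * influence (z n 0 \<omega>, v n 0 \<omega>, eps n 0 \<omega>) + (mean_shift n)\<^sup>2)"
      unfolding summand_def by (intro ext) (simp add: power2_diff algebra_simps)
    then show ?thesis using moments by (simp add: prob_space power2_eq_square)
  qed
  have shift_lim: "mean_shift \<longlonglongrightarrow> 0" unfolding mean_shift_def
    by (intro tendsto_divide_0[OF tendsto_const] filterlim_at_top_imp_at_infinity
        sqrt_at_top[THEN filterlim_compose] filterlim_real_sequentially)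
  have "(\<lambda>n. (\<integral>\<omega>. (influence (z n 0 \<omega>, v n 0 \<omega>, eps n 0 \<omega>))\<^sup>2 \<partial>M n) - (mean_shift n)\<^sup>2) \<longlonglongrightarrow> V - 0\<^sup>2"
    by (intro tendsto_diff lim_influence_second_moment tendsto_power shift_lim)
  moreover have "eventually (\<lambda>n. (\<integral>\<omega>. (influence (z n 0 \<omega>, v n 0 \<omega>, eps n 0 \<omega>))\<^sup>2 \<partial>M n) - (mean_shift n)\<^sup>2 = (\<integral>\<omega>. (summand n 0 \<omega>)\<^sup>2 \<partial>M n)) sequentially"
    using eventually_gt_at_top[of 0] by eventually_elim (simp add: eq)
  ultimately show ?thesis using tendsto_cong by force
qed

lemma clt_summands: "weak_conv_m (\<lambda>n. distr (M n) borel (\<lambda>\<omega>. (\<Sum>i<n. summand n i \<omega>) / sqrt (real n * V)))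
           std_normal_distribution"
proof (rule clt_triangular_array[where K="summand_const powr (2 + \<delta>) * majorant_bound" and \<delta>=\<delta>])
  show "prob_space (M n)" for n by (rule prob)
  show "prob_space.indep_vars (M n) (\<lambda>_. borel) (summand n) {..<n}" for n
  proof -
    interpret prob_space "M n" by (rule prob)
    have "indep_vars (\<lambda>_. borel) (\<lambda>i \<omega>. (\<lambda>t. influence t - mean_shift n) (z n i \<omega>, v n i \<omega>, eps n i \<omega>)) {..<n}"
      by (rule indep_vars_compose2[OF indep]) measurable
    then show ?thesis unfolding summand_def by simp
  qed
  show "distr (M n) borel (summand n i) = distr (M n) borel (summand n 0)" if "i < n" for n i
  proof -
    have T: "(\<lambda>\<omega>. (z n l \<omega>, v n l \<omega>, eps n l \<omega>)) \<in> borel_measurable (M n)" for l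
      by (intro borel_measurable_Pair) measurable
    have "distr (M n) borel (summand n l) = distr (distr (M n) borel (\<lambda>\<omega>. (z n l \<omega>, v n l \<omega>, eps n l \<omega>))) borel (\<lambda>t. influence t - mean_shift n)" for l
      unfolding summand_def by (subst distr_distr) (use T in \<open>auto simp: comp_def\<close>)
    then show ?thesis using ident[OF that] by simp
  qed
  show "integrable (M n) (summand n 0)" if n: "0 < n" for n
  proof -
    interpret prob_space "M n" by (rule prob)
    show ?thesis unfolding summand_def using influence_mean(1)[OF n] by (intro Bochner_Integration.integrable_diff) auto
  qed
  show "(\<integral>\<omega>. summand n 0 \<omega> \<partial>M n) = 0" if n: "0 < n" for n
  proof -
    interpret prob_space "M n" by (rule prob)
    show ?thesis unfolding summand_def using influence_mean[OF n] by (simp add: prob_space)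
  qed
  show "integrable (M n) (\<lambda>\<omega>. (summand n 0 \<omega>)\<^sup>2)" if n: "0 < n" for n
    by (rule integrable_le_majorant(1)[OF n _ _ summand_square_le[OF n]]) auto
  show "(\<lambda>n. \<integral>\<omega>. (summand n 0 \<omega>)\<^sup>2 \<partial>M n) \<longlonglongrightarrow> V" by (rule lim_summand_second_moment)
  show "0 < V" by (rule V_pos)
  show "0 < \<delta>" "\<delta> \<le> 1" using \<delta>_bounds by auto
  show "integrable (M n) (\<lambda>\<omega>. \<bar>summand n 0 \<omega>\<bar> powr (2 + \<delta>))" if n: "0 < n" for n
    by (rule integrable_le_majorant(1)[OF n _ _ summand_powr_le[OF n]]) auto
  show "(\<integral>\<omega>. \<bar>summand n 0 \<omega>\<bar> powr (2 + \<delta>) \<partial>M n) \<le> summand_const powr (2 + \<delta>) * majorant_bound" if n: "0 < n" for n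
    using integrable_le_majorant(2)[OF n _ _ summand_powr_le[OF n]] by auto
qed

definition "obs n i \<omega> = (z n i \<omega>, v n i \<omega>, eps n i \<omega>)"

lemma one_le_majorant_bound: "1 \<le> majorant_bound" unfolding majorant_bound_def by simp

lemma borel_measurable_obs[measurable]: "obs n i \<in> borel_measurable (M n)"
  unfolding obs_def by (intro borel_measurable_Pair) measurable

lemma chebyshev_row:
  fixes g :: "(real^'k) \<times> real \<times> real \<Rightarrow> real"
  assumes n: "0 < n" and g[measurable]: "g \<in> borel_measurable borel"
    and gb: "\<And>\<omega>. (g (obs n 0 \<omega>))\<^sup>2 \<le> majorant n \<omega>" and a: "0 < a"
  shows "measure (M n) {\<omega> \<in> space (M n). a \<le> \<bar>(\<Sum>i<n. g (obs n i \<omega>)) - real n * (\<integral>\<omega>. g (obs n 0 \<omega>) \<partial>M n)\<bar>}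
      \<le> real n * majorant_bound / a\<^sup>2"
proof -
  interpret prob_space "M n" by (rule prob)
  have ind: "indep_vars (\<lambda>_. borel) (obs n) {..<n}" unfolding obs_def[abs_def] by (rule indep)
  have id: "\<And>i. i < n \<Longrightarrow> distr (M n) borel (obs n i) = distr (M n) borel (obs n 0)"
    unfolding obs_def[abs_def] by (rule ident)
  have gbi: "\<bar>(g (obs n 0 \<omega>))\<^sup>2\<bar> \<le> 1 * majorant n \<omega>" for \<omega> using gb[of \<omega>] by simp
  note I = integrable_le_majorant[OF n _ _ gbi]
  have sq: "integrable (M n) (\<lambda>\<omega>. (g (obs n 0 \<omega>))\<^sup>2)" using I(1) by simp
  have e2: "(\<integral>\<omega>. (g (obs n 0 \<omega>))\<^sup>2 \<partial>M n) \<le> majorant_bound" using I(2) by simp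
  have "measure (M n) {\<omega> \<in> space (M n). a \<le> \<bar>(\<Sum>i<n. g (obs n i \<omega>)) - real n * (\<integral>\<omega>. g (obs n 0 \<omega>) \<partial>M n)\<bar>}
      \<le> real n * (\<integral>\<omega>. (g (obs n 0 \<omega>))\<^sup>2 \<partial>M n) / a\<^sup>2"
    by (rule chebyshev_iid_sum[OF ind id g sq n a])
  also have "\<dots> \<le> real n * majorant_bound / a\<^sup>2" using e2 by (intro divide_right_mono mult_left_mono) auto
  finally show ?thesis .
qed

lemma lln_row:
  fixes g :: "(real^'k) \<times> real \<times> real \<Rightarrow> real"
  assumes g[measurable]: "g \<in> borel_measurable borel"
    and gb: "\<And>n \<omega>. 0 < n \<Longrightarrow> (g (obs n 0 \<omega>))\<^sup>2 \<le> majorant n \<omega>"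
    and lim: "(\<lambda>n. \<integral>\<omega>. g (obs n 0 \<omega>) \<partial>M n) \<longlonglongrightarrow> L" and tol: "0 < tol" and pr: "0 < pr"
  shows "eventually (\<lambda>n. measure (M n) {\<omega> \<in> space (M n). tol < \<bar>(\<Sum>i<n. g (obs n i \<omega>)) / real n - L\<bar>} \<le> pr) sequentially"
proof -
  define E where "E n = (\<integral>\<omega>. g (obs n 0 \<omega>) \<partial>M n)" for n
  have ev1: "eventually (\<lambda>n. \<bar>E n - L\<bar> < tol / 2) sequentially"
    using tendstoD[OF lim, of "tol / 2"] tol unfolding E_def dist_real_def by simp
  have ev2: "eventually (\<lambda>n. real n \<ge> 4 * majorant_bound / (tol\<^sup>2 * pr) + 1) sequentially"
    by (rule eventually_sequentiallyI[of "nat \<lceil>4 * majorant_bound / (tol\<^sup>2 * pr) + 1\<rceil>"]) linarith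
  show ?thesis using ev1 ev2
  proof eventually_elim
    case (elim n)
    have "0 \<le> 4 * majorant_bound / (tol\<^sup>2 * pr)" using one_le_majorant_bound tol pr by simp
    then have n1: "1 \<le> real n" using elim(2) by linarith
    then have n: "0 < n" by simp
    interpret prob_space "M n" by (rule prob)
    have sub: "{\<omega> \<in> space (M n). tol < \<bar>(\<Sum>i<n. g (obs n i \<omega>)) / real n - L\<bar>}
        \<subseteq> {\<omega> \<in> space (M n). real n * (tol / 2) \<le> \<bar>(\<Sum>i<n. g (obs n i \<omega>)) - real n * E n\<bar>}"
    proof safe
      fix \<omega> assume "\<omega> \<in> space (M n)" "tol < \<bar>(\<Sum>i<n. g (obs n i \<omega>)) / real n - L\<bar>"
      then have "tol / 2 < \<bar>(\<Sum>i<n. g (obs n i \<omega>)) / real n - E n\<bar>" using elim(1) by linarith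
      also have "\<dots> = \<bar>(\<Sum>i<n. g (obs n i \<omega>)) - real n * E n\<bar> / real n"
        using n1 by (simp add: field_simps abs_div)
      finally show "real n * (tol / 2) \<le> \<bar>(\<Sum>i<n. g (obs n i \<omega>)) - real n * E n\<bar>"
        using n1 by (simp add: field_simps)
    qed
    have "measure (M n) {\<omega> \<in> space (M n). tol < \<bar>(\<Sum>i<n. g (obs n i \<omega>)) / real n - L\<bar>}
        \<le> measure (M n) {\<omega> \<in> space (M n). real n * (tol / 2) \<le> \<bar>(\<Sum>i<n. g (obs n i \<omega>)) - real n * E n\<bar>}"
      by (rule finite_measure_mono[OF sub]) measurable
    also have "\<dots> \<le> real n * majorant_bound / (real n * (tol / 2))\<^sup>2"
      unfolding E_def by (rule chebyshev_row[OF n g gb[OF n]]) (use tol n in auto)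
    also have "\<dots> = 4 * majorant_bound / (tol\<^sup>2 * real n)" using n1 tol by (simp add: field_simps power2_eq_square)
    also have "\<dots> \<le> pr"
    proof -
      have "4 * majorant_bound / (tol\<^sup>2 * pr) \<le> real n" using elim(2) by linarith
      then show ?thesis using tol pr n1 by (simp add: field_simps)
    qed
    finally show ?case .
  qed
qed

lemma tight_row:
  fixes g :: "(real^'k) \<times> real \<times> real \<Rightarrow> real"
  assumes n: "0 < n" and g[measurable]: "g \<in> borel_measurable borel"
    and gb: "\<And>\<omega>. (g (obs n 0 \<omega>))\<^sup>2 \<le> majorant n \<omega>"
    and m0: "(\<integral>\<omega>. g (obs n 0 \<omega>) \<partial>M n) = 0" and K: "0 < K"
  shows "measure (M n) {\<omega> \<in> space (M n). K < \<bar>(\<Sum>i<n. g (obs n i \<omega>)) / sqrt (real n)\<bar>} \<le> majorant_bound / K\<^sup>2"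
proof -
  interpret prob_space "M n" by (rule prob)
  have sn: "0 < sqrt (real n)" using n by simp
  have sub: "{\<omega> \<in> space (M n). K < \<bar>(\<Sum>i<n. g (obs n i \<omega>)) / sqrt (real n)\<bar>}
      \<subseteq> {\<omega> \<in> space (M n). K * sqrt (real n) \<le> \<bar>(\<Sum>i<n. g (obs n i \<omega>)) - real n * (\<integral>\<omega>. g (obs n 0 \<omega>) \<partial>M n)\<bar>}"
    using sn by (auto simp: m0 abs_div field_simps)
  have "measure (M n) {\<omega> \<in> space (M n). K < \<bar>(\<Sum>i<n. g (obs n i \<omega>)) / sqrt (real n)\<bar>}
      \<le> measure (M n) {\<omega> \<in> space (M n). K * sqrt (real n) \<le> \<bar>(\<Sum>i<n. g (obs n i \<omega>)) - real n * (\<integral>\<omega>. g (obs n 0 \<omega>) \<partial>M n)\<bar>}"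
    by (rule finite_measure_mono[OF sub]) measurable
  also have "\<dots> \<le> real n * majorant_bound / (K * sqrt (real n))\<^sup>2"
    by (rule chebyshev_row[OF n g gb]) (use K sn in auto)
  also have "\<dots> = majorant_bound / K\<^sup>2" using n K by (simp add: power_mult_distrib)
  finally show ?thesis .
qed

definition "zz_term j k (t :: (real^'k) \<times> real \<times> real) = fst t $ j * fst t $ k"
definition "vz_term j (t :: (real^'k) \<times> real \<times> real) = fst (snd t) * fst t $ j"
definition "vv_term (t :: (real^'k) \<times> real \<times> real) = (fst (snd t))\<^sup>2"
definition "ez_term j (t :: (real^'k) \<times> real \<times> real) = snd (snd t) * fst t $ j"

lemma borel_measurable_terms[measurable]: "zz_term j k \<in> borel_measurable borel" "vz_term j \<in> borel_measurable borel"
  "vv_term \<in> borel_measurable borel" "ez_term j \<in> borel_measurable borel"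
  unfolding zz_term_def vz_term_def vv_term_def ez_term_def
  by (intro borel_measurable_continuous_onI continuous_intros)+

lemma terms_square_le_majorant:
  "(zz_term j k (obs n 0 \<omega>))\<^sup>2 \<le> majorant n \<omega>" "(vz_term j (obs n 0 \<omega>))\<^sup>2 \<le> majorant n \<omega>"
  "(vv_term (obs n 0 \<omega>))\<^sup>2 \<le> majorant n \<omega>" "(ez_term j (obs n 0 \<omega>))\<^sup>2 \<le> majorant n \<omega>"
proof -
  note m = envelope_bounds[of n \<omega>]
  have P: "\<And>a b. \<bar>a\<bar> \<le> envelope n \<omega> \<Longrightarrow> \<bar>b\<bar> \<le> envelope n \<omega> \<Longrightarrow> (a * b)\<^sup>2 \<le> majorant n \<omega>"
  proof -
    fix a b :: real assume "\<bar>a\<bar> \<le> envelope n \<omega>" "\<bar>b\<bar> \<le> envelope n \<omega>"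
    then have "\<bar>a * a * b * b\<bar> \<le> (envelope n \<omega>)^4" using abs_prod4_le_power4 m(1) by blast
    moreover have "(a * b)\<^sup>2 = \<bar>a * a * b * b\<bar>" by (simp add: power2_eq_square abs_mult mult_ac)
    ultimately show "(a * b)\<^sup>2 \<le> majorant n \<omega>" using m(7) by linarith
  qed
  show "(zz_term j k (obs n 0 \<omega>))\<^sup>2 \<le> majorant n \<omega>" unfolding zz_term_def obs_def by (simp add: P m(5))
  show "(vz_term j (obs n 0 \<omega>))\<^sup>2 \<le> majorant n \<omega>" unfolding vz_term_def obs_def by (simp add: P m(4,5))
  show "(vv_term (obs n 0 \<omega>))\<^sup>2 \<le> majorant n \<omega>" unfolding vv_term_def obs_def using P[OF m(4) m(4)] by (simp add: power2_eq_square)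
  show "(ez_term j (obs n 0 \<omega>))\<^sup>2 \<le> majorant n \<omega>" unfolding ez_term_def obs_def by (simp add: P m(3,5))
qed

lemma lim_terms_mean:
  "(\<lambda>n. \<integral>\<omega>. zz_term j k (obs n 0 \<omega>) \<partial>M n) \<longlonglongrightarrow> Q $ j $ k"
  "(\<lambda>n. \<integral>\<omega>. vz_term j (obs n 0 \<omega>) \<partial>M n) \<longlonglongrightarrow> 0"
  "(\<lambda>n. \<integral>\<omega>. vv_term (obs n 0 \<omega>) \<partial>M n) \<longlonglongrightarrow> \<sigma>v2"
  "0 < n \<Longrightarrow> (\<integral>\<omega>. ez_term j (obs n 0 \<omega>) \<partial>M n) = 0"
proof -
  show "(\<lambda>n. \<integral>\<omega>. zz_term j k (obs n 0 \<omega>) \<partial>M n) \<longlonglongrightarrow> Q $ j $ k"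
    unfolding zz_term_def obs_def using lim_zz by simp
  show "(\<lambda>n. \<integral>\<omega>. vv_term (obs n 0 \<omega>) \<partial>M n) \<longlonglongrightarrow> \<sigma>v2"
    unfolding vv_term_def obs_def using lim_v by simp
  show "0 < n \<Longrightarrow> (\<integral>\<omega>. ez_term j (obs n 0 \<omega>) \<partial>M n) = 0"
    unfolding ez_term_def obs_def using integral_ez_nth(2) by simp
  have "eventually (\<lambda>n. 0 = (\<integral>\<omega>. vz_term j (obs n 0 \<omega>) \<partial>M n)) sequentially"
    using eventually_gt_at_top[of 0] by eventually_elim (simp add: vz_term_def obs_def integral_vz_nth(2))
  then show "(\<lambda>n. \<integral>\<omega>. vz_term j (obs n 0 \<omega>) \<partial>M n) \<longlonglongrightarrow> 0"
    using tendsto_cong[of "\<lambda>_. 0"] by force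
qed

lemma sum_terms:
  "(\<Sum>i<n. zz_term j k (obs n i \<omega>)) = ZtZ n (\<lambda>i. z n i \<omega>) $ j $ k"
  "(\<Sum>i<n. vz_term j (obs n i \<omega>)) = Zt n (\<lambda>i. z n i \<omega>) (\<lambda>i. v n i \<omega>) $ j"
  "(\<Sum>i<n. vv_term (obs n i \<omega>)) = (\<Sum>i<n. (v n i \<omega>)\<^sup>2)"
  "(\<Sum>i<n. ez_term j (obs n i \<omega>)) = Zt n (\<lambda>i. z n i \<omega>) (\<lambda>i. eps n i \<omega>) $ j"
  unfolding zz_term_def vz_term_def vv_term_def ez_term_def obs_def ZtZ_nth Zt_nth by simp_all

lemma summands_sum_eq:
  assumes n: "0 < n"
  shows "\<tau> + sqrt V * ((\<Sum>i<n. summand n i \<omega>) / sqrt (real n * V)) =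
    (1 - \<sigma>x2 / \<gamma>2) * (\<pi> \<bullet> Zt n (\<lambda>i. z n i \<omega>) (\<lambda>i. eps n i \<omega>)) / sqrt (real n)
    + (\<Sum>i<n. v n i \<omega> * eps n i \<omega>) / sqrt (real n)"
proof -
  have sum: "(\<Sum>i<n. summand n i \<omega>) = \<alpha> * (\<pi> \<bullet> Zt n (\<lambda>i. z n i \<omega>) (\<lambda>i. eps n i \<omega>))
      + (\<Sum>i<n. v n i \<omega> * eps n i \<omega>) - real n * mean_shift n"
    unfolding summand_def influence_def inner_Zt
    by (simp add: sum_subtractf sum.distrib sum_distrib_left algebra_simps inner_commute)
  have sV: "0 < sqrt V" using V_pos by simp
  have sn: "0 < sqrt (real n)" using n by simp
  have mean_shift: "real n * mean_shift n = \<tau> * sqrt (real n)"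
    unfolding mean_shift_def using sn by (simp add: field_simps real_sqrt_mult[symmetric])
  have "sqrt V * ((\<Sum>i<n. summand n i \<omega>) / sqrt (real n * V)) = (\<Sum>i<n. summand n i \<omega>) / sqrt (real n)"
    using sV sn by (simp add: real_sqrt_mult field_simps)
  then show ?thesis unfolding sum mean_shift \<alpha>_def using sn by (simp add: field_simps)
qed

text \<open>The event on which the deterministic estimate \<open>tau_hat_approx_uniform\<close> applies.\<close>

definition "sample_regular e K n \<omega> \<longleftrightarrow>
    (\<forall>j k. \<bar>ZtZ n (\<lambda>i. z n i \<omega>) $ j $ k / real n - Q $ j $ k\<bar> \<le> e)
  \<and> (\<forall>j. \<bar>Zt n (\<lambda>i. z n i \<omega>) (\<lambda>i. v n i \<omega>) $ j / real n\<bar> \<le> e)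
  \<and> \<bar>(\<Sum>i<n. (v n i \<omega>)\<^sup>2) / real n - \<sigma>v2\<bar> \<le> e
  \<and> (\<forall>j. \<bar>Zt n (\<lambda>i. z n i \<omega>) (\<lambda>i. eps n i \<omega>) $ j / sqrt (real n)\<bar> \<le> K)"

lemma pred_sample_regular[measurable]: "Measurable.pred (M n) (sample_regular e K n)"
  unfolding sample_regular_def ZtZ_nth Zt_nth by measurable

definition "tight_radius p = sqrt (2 * real CARD('k) * majorant_bound / p)"

lemma prob_not_sample_regular:
  assumes e: "0 < e" and p: "0 < p"
  shows "eventually (\<lambda>n. measure (M n) {\<omega> \<in> space (M n). \<not> sample_regular e (tight_radius p) n \<omega>} \<le> p)
    sequentially"
proof -
  define kk where "kk = real CARD('k)"
  define K where "K = tight_radius p"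
  have kk: "1 \<le> kk" unfolding kk_def by (simp add: Suc_le_eq)
  have K: "0 < K" "majorant_bound / K\<^sup>2 = p / (2 * kk)"
    using kk one_le_majorant_bound p unfolding K_def tight_radius_def kk_def by (auto simp: field_simps)
  have "eventually (\<lambda>n. \<forall>j k. measure (M n) {\<omega> \<in> space (M n).
      e < \<bar>(\<Sum>i<n. zz_term j k (obs n i \<omega>)) / real n - Q $ j $ k\<bar>} \<le> p / (4 * kk\<^sup>2)) sequentially"
    by (intro eventually_all_finite lln_row borel_measurable_terms terms_square_le_majorant lim_terms_mean e)
      (use p kk in simp)
  moreover have "eventually (\<lambda>n. \<forall>j. measure (M n) {\<omega> \<in> space (M n).
      e < \<bar>(\<Sum>i<n. vz_term j (obs n i \<omega>)) / real n - 0\<bar>} \<le> p / (8 * kk)) sequentially"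
    by (intro eventually_all_finite lln_row borel_measurable_terms terms_square_le_majorant lim_terms_mean e)
      (use p kk in simp)
  moreover have "eventually (\<lambda>n. measure (M n) {\<omega> \<in> space (M n).
      e < \<bar>(\<Sum>i<n. vv_term (obs n i \<omega>)) / real n - \<sigma>v2\<bar>} \<le> p / 8) sequentially"
    by (intro lln_row borel_measurable_terms terms_square_le_majorant lim_terms_mean e) (use p in simp)
  ultimately show ?thesis using eventually_gt_at_top[of 0] unfolding K_def[symmetric]
  proof eventually_elim
    case (elim n)
    interpret prob_space "M n" by (rule prob)
    define BA where "BA j k = {\<omega> \<in> space (M n). e < \<bar>(\<Sum>i<n. zz_term j k (obs n i \<omega>)) / real n - Q $ j $ k\<bar>}" for j k
    define BW where "BW j = {\<omega> \<in> space (M n). e < \<bar>(\<Sum>i<n. vz_term j (obs n i \<omega>)) / real n - 0\<bar>}" for j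
    define BV where "BV = {\<omega> \<in> space (M n). e < \<bar>(\<Sum>i<n. vv_term (obs n i \<omega>)) / real n - \<sigma>v2\<bar>}"
    define BS where "BS j = {\<omega> \<in> space (M n). K < \<bar>(\<Sum>i<n. ez_term j (obs n i \<omega>)) / sqrt (real n)\<bar>}" for j
    have sets[measurable]: "BA j k \<in> events" "BW j \<in> events" "BV \<in> events" "BS j \<in> events" for j k
      unfolding BA_def BW_def BV_def BS_def by measurable
    have "{\<omega> \<in> space (M n). \<not> sample_regular e K n \<omega>}
        = ((\<Union>j. \<Union>k. BA j k) \<union> (\<Union>j. BW j)) \<union> BV \<union> (\<Union>j. BS j)"
      unfolding sample_regular_def BA_def BW_def BV_def BS_def sum_terms by (auto simp: not_le)
    also have "prob \<dots> \<le> (prob (\<Union>j. \<Union>k. BA j k) + prob (\<Union>j. BW j)) + prob BV + prob (\<Union>j. BS j)"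
      by (intro order.trans[OF measure_subadditive] add_mono measure_subadditive order_refl) auto
    also have "\<dots> \<le> (kk * (kk * (p / (4 * kk\<^sup>2))) + kk * (p / (8 * kk))) + p / 8 + kk * (p / (2 * kk))"
    proof (intro add_mono)
      show "prob (\<Union>j. \<Union>k. BA j k) \<le> kk * (kk * (p / (4 * kk\<^sup>2)))"
        using elim(1) unfolding kk_def
        by (intro prob_UN_le_card_mult prob_UN_le_card_mult[where c = "p / (4 * kk\<^sup>2)", folded kk_def])
          (auto simp: BA_def)
      show "prob (\<Union>j. BW j) \<le> kk * (p / (8 * kk))"
        using elim(2) unfolding kk_def by (intro prob_UN_le_card_mult) (auto simp: BW_def kk_def)
      show "prob BV \<le> p / 8" using elim(3) unfolding BV_def .
      show "prob (\<Union>j. BS j) \<le> kk * (p / (2 * kk))"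
        using tight_row[OF elim(4) borel_measurable_terms(4) terms_square_le_majorant(4)
            lim_terms_mean(4)[OF elim(4)] K(1)] K(2) unfolding kk_def
        by (intro prob_UN_le_card_mult) (auto simp: BS_def kk_def)
    qed
    also have "\<dots> = p" using kk by (simp add: field_simps power2_eq_square)
    finally show ?case .
  qed
qed

lemma tau_hat_close_to_summands:
  assumes d: "0 < d" and p: "0 < p"
  shows "eventually (\<lambda>n. measure (M n) {\<omega> \<in> space (M n).
     d < \<bar>tau_hat n (\<lambda>i. z n i \<omega>) (\<lambda>i. x n i \<omega>) (\<lambda>i. y n i \<omega>)
            - (\<tau> + sqrt V * ((\<Sum>i<n. summand n i \<omega>) / sqrt (real n * V)))\<bar>} \<le> p) sequentially"
proof -
  have "0 \<le> tight_radius p" unfolding tight_radius_def using p one_le_majorant_bound by simp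
  from tau_hat_approx_uniform[OF Q_pos \<gamma>2_def \<gamma>2_pos \<sigma>x2_def less_imp_le[OF \<sigma>v2_pos] d this, where \<beta>=\<beta>]
  obtain e where e: "0 < e" and approx: "\<forall>n zz vv ee. 0 < n
    \<longrightarrow> (\<forall>j k. \<bar>ZtZ n zz $ j $ k / real n - Q $ j $ k\<bar> \<le> e)
    \<longrightarrow> (\<forall>j. \<bar>Zt n zz vv $ j / real n\<bar> \<le> e)
    \<longrightarrow> \<bar>(\<Sum>i<n. (vv i)\<^sup>2) / real n - \<sigma>v2\<bar> \<le> e
    \<longrightarrow> (\<forall>j. \<bar>Zt n zz ee $ j / sqrt (real n)\<bar> \<le> tight_radius p)
    \<longrightarrow> \<bar>tau_hat n zz (\<lambda>i. zz i \<bullet> \<pi> + vv i) (\<lambda>i. \<beta> * (zz i \<bullet> \<pi> + vv i) + ee i)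
          - ((1 - \<sigma>x2 / \<gamma>2) * (\<pi> \<bullet> Zt n zz ee) / sqrt (real n) + (\<Sum>i<n. vv i * ee i) / sqrt (real n))\<bar> \<le> d"
    by blast
  show ?thesis using prob_not_sample_regular[OF e p] eventually_gt_at_top[of 0]
  proof eventually_elim
    case (elim n)
    interpret prob_space "M n" by (rule prob)
    have "{\<omega> \<in> space (M n). d < \<bar>tau_hat n (\<lambda>i. z n i \<omega>) (\<lambda>i. x n i \<omega>) (\<lambda>i. y n i \<omega>)
            - (\<tau> + sqrt V * ((\<Sum>i<n. summand n i \<omega>) / sqrt (real n * V)))\<bar>}
        \<subseteq> {\<omega> \<in> space (M n). \<not> sample_regular e (tight_radius p) n \<omega>}"
    proof safe
      fix \<omega> assume far: "d < \<bar>tau_hat n (\<lambda>i. z n i \<omega>) (\<lambda>i. x n i \<omega>) (\<lambda>i. y n i \<omega>)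
            - (\<tau> + sqrt V * ((\<Sum>i<n. summand n i \<omega>) / sqrt (real n * V)))\<bar>"
        and regular: "sample_regular e (tight_radius p) n \<omega>"
      have "\<bar>tau_hat n (\<lambda>i. z n i \<omega>) (\<lambda>i. z n i \<omega> \<bullet> \<pi> + v n i \<omega>)
            (\<lambda>i. \<beta> * (z n i \<omega> \<bullet> \<pi> + v n i \<omega>) + eps n i \<omega>)
          - ((1 - \<sigma>x2 / \<gamma>2) * (\<pi> \<bullet> Zt n (\<lambda>i. z n i \<omega>) (\<lambda>i. eps n i \<omega>)) / sqrt (real n)
            + (\<Sum>i<n. v n i \<omega> * eps n i \<omega>) / sqrt (real n))\<bar> \<le> d"
        using approx[rule_format, of n "\<lambda>i. z n i \<omega>" "\<lambda>i. v n i \<omega>" "\<lambda>i. eps n i \<omega>"] regular elim(2)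
        unfolding sample_regular_def by blast
      then show False using far unfolding summands_sum_eq[OF elim(2)] by (simp add: x_def y_def)
    qed
    moreover have "{\<omega> \<in> space (M n). \<not> sample_regular e (tight_radius p) n \<omega>} \<in> events" by measurable
    ultimately show ?case using elim(1) by (meson finite_measure_mono order_trans)
  qed
qed

end

theorem theorem5:
  fixes M :: "nat \<Rightarrow> 'a measure"
    and z :: "nat \<Rightarrow> nat \<Rightarrow> 'a \<Rightarrow> real^'k"
    and v eps x y :: "nat \<Rightarrow> nat \<Rightarrow> 'a \<Rightarrow> real"
    and \<pi> :: "real^'k" and Q :: "real^'k^'k"
    and \<beta> \<tau> \<sigma>v2 \<sigma>e2 :: real
  assumes prob: "\<And>n. prob_space (M n)"
    and meas_z: "\<And>n i. z n i \<in> borel_measurable (M n)"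
    and meas_v: "\<And>n i. v n i \<in> borel_measurable (M n)"
    and meas_e: "\<And>n i. eps n i \<in> borel_measurable (M n)"
    \<comment> \<open>(a) within rows iid and mean zero\<close>
    and indep: "\<And>n. prob_space.indep_vars (M n) (\<lambda>_. borel)
                   (\<lambda>i \<omega>. (z n i \<omega>, v n i \<omega>, eps n i \<omega>)) {..<n}"
    and ident: "\<And>n i. i < n \<Longrightarrow>
                   distr (M n) borel (\<lambda>\<omega>. (z n i \<omega>, v n i \<omega>, eps n i \<omega>))
                 = distr (M n) borel (\<lambda>\<omega>. (z n 0 \<omega>, v n 0 \<omega>, eps n 0 \<omega>))"
    and mean_z: "\<And>n i. i < n \<Longrightarrow> (\<integral>\<omega>. z n i \<omega> \<partial>M n) = 0"
    and mean_v: "\<And>n i. i < n \<Longrightarrow> (\<integral>\<omega>. v n i \<omega> \<partial>M n) = 0"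
    and mean_e: "\<And>n i. i < n \<Longrightarrow> (\<integral>\<omega>. eps n i \<omega> \<partial>M n) = 0"
    \<comment> \<open>(b)\<close>
    and ze: "\<And>n i. i < n \<Longrightarrow> (\<integral>\<omega>. eps n i \<omega> *\<^sub>R z n i \<omega> \<partial>M n) = 0"
    and zv: "\<And>n i. i < n \<Longrightarrow> (\<integral>\<omega>. v n i \<omega> *\<^sub>R z n i \<omega> \<partial>M n) = 0"
    and ev: "\<And>n i. i < n \<Longrightarrow> (\<integral>\<omega>. eps n i \<omega> * v n i \<omega> \<partial>M n) = \<tau> / sqrt (real n)"
    \<comment> \<open>(c) uniformly bounded (4+eta)-th moments\<close>
    and moments: "\<exists>\<eta>>0. \<exists>C. \<forall>n i. i < n \<longrightarrow>
        (\<integral>\<^sup>+\<omega>. ennreal (norm (z n i \<omega>) powr (4 + \<eta>)) \<partial>M n) \<le> ennreal C \<and>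
        (\<integral>\<^sup>+\<omega>. ennreal (\<bar>eps n i \<omega>\<bar> powr (4 + \<eta>)) \<partial>M n) \<le> ennreal C \<and>
        (\<integral>\<^sup>+\<omega>. ennreal (\<bar>v n i \<omega>\<bar> powr (4 + \<eta>)) \<partial>M n) \<le> ennreal C"
    \<comment> \<open>(d)\<close>
    and lim_Q: "(\<lambda>n. \<integral>\<omega>. outer (z n 0 \<omega>) (z n 0 \<omega>) \<partial>M n) \<longlonglongrightarrow> Q"
    and Q_pos: "pos_def_mat Q"
    and lim_v: "(\<lambda>n. \<integral>\<omega>. (v n 0 \<omega>)\<^sup>2 \<partial>M n) \<longlonglongrightarrow> \<sigma>v2" and \<sigma>v2_pos: "\<sigma>v2 > 0"
    and lim_e: "(\<lambda>n. \<integral>\<omega>. (eps n 0 \<omega>)\<^sup>2 \<partial>M n) \<longlonglongrightarrow> \<sigma>e2" and \<sigma>e2_pos: "\<sigma>e2 > 0"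
    \<comment> \<open>(e)\<close>
    and e1: "(\<lambda>n. (\<integral>\<omega>. (eps n 0 \<omega>)\<^sup>2 *\<^sub>R outer (z n 0 \<omega>) (z n 0 \<omega>) \<partial>M n)
               - (\<integral>\<omega>. (eps n 0 \<omega>)\<^sup>2 \<partial>M n) *\<^sub>R (\<integral>\<omega>. outer (z n 0 \<omega>) (z n 0 \<omega>) \<partial>M n))
             \<longlonglongrightarrow> 0"
    and e2: "(\<lambda>n. (\<integral>\<omega>. ((eps n 0 \<omega>)\<^sup>2 * v n 0 \<omega>) *\<^sub>R z n 0 \<omega> \<partial>M n)
               - (\<integral>\<omega>. (eps n 0 \<omega>)\<^sup>2 \<partial>M n) *\<^sub>R (\<integral>\<omega>. v n 0 \<omega> *\<^sub>R z n 0 \<omega> \<partial>M n))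
             \<longlonglongrightarrow> 0"
    and e3: "(\<lambda>n. (\<integral>\<omega>. (eps n 0 \<omega>)\<^sup>2 * (v n 0 \<omega>)\<^sup>2 \<partial>M n)
               - (\<integral>\<omega>. (eps n 0 \<omega>)\<^sup>2 \<partial>M n) * (\<integral>\<omega>. (v n 0 \<omega>)\<^sup>2 \<partial>M n))
             \<longlonglongrightarrow> 0"
    \<comment> \<open>(f)\<close>
    and x_def: "\<And>n i \<omega>. x n i \<omega> = z n i \<omega> \<bullet> \<pi> + v n i \<omega>"
    and \<pi>_nz: "\<pi> \<noteq> 0"
    and y_def: "\<And>n i \<omega>. y n i \<omega> = \<beta> * x n i \<omega> + eps n i \<omega>"
  shows "let \<gamma>2 = \<pi> \<bullet> (Q *v \<pi>); \<sigma>x2 = \<gamma>2 + \<sigma>v2; V = \<sigma>e2 * \<sigma>x2 * (\<sigma>v2 / \<gamma>2) in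
         weak_conv_m
           (\<lambda>n. distr (M n) borel
                  (\<lambda>\<omega>. tau_hat n (\<lambda>i. z n i \<omega>) (\<lambda>i. x n i \<omega>) (\<lambda>i. y n i \<omega>)))
           (density lborel (normal_density \<tau> (sqrt V)))"
proof -
  obtain \<eta> C where \<eta>: "0 < \<eta>" and bounded: "\<forall>n i. i < n \<longrightarrow>
        (\<integral>\<^sup>+\<omega>. ennreal (norm (z n i \<omega>) powr (4 + \<eta>)) \<partial>M n) \<le> ennreal C \<and>
        (\<integral>\<^sup>+\<omega>. ennreal (\<bar>eps n i \<omega>\<bar> powr (4 + \<eta>)) \<partial>M n) \<le> ennreal C \<and>
        (\<integral>\<^sup>+\<omega>. ennreal (\<bar>v n i \<omega>\<bar> powr (4 + \<eta>)) \<partial>M n) \<le> ennreal C"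
    using moments by blast
  interpret tsls_array M z v eps x y \<pi> Q \<beta> \<tau> \<sigma>v2 \<sigma>e2 \<eta> C
    by (rule tsls_array.intro) (fact assms \<eta> bounded)+
  have "weak_conv_m (\<lambda>n. distr (M n) borel (\<lambda>\<omega>. tau_hat n (\<lambda>i. z n i \<omega>) (\<lambda>i. x n i \<omega>) (\<lambda>i. y n i \<omega>)))
      (density lborel (normal_density \<tau> (sqrt V)))"
  proof (rule slutsky_affine_normal[OF prob _ _ clt_summands _ tau_hat_close_to_summands])
    show "(\<lambda>\<omega>. tau_hat n (\<lambda>i. z n i \<omega>) (\<lambda>i. x n i \<omega>) (\<lambda>i. y n i \<omega>)) \<in> borel_measurable (M n)" for n
      by (rule borel_measurable_tau_hat) (auto simp: x_def[abs_def] y_def[abs_def])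
  qed (use V_pos in auto)
  then show ?thesis unfolding V_def \<sigma>x2_def \<gamma>2_def Let_def .
qed

end
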